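(* Let $(X_i,D_i,Y_i)$, $i=1,\ldots,n$, be i.i.d. copies of $(X,D,Y)$, where $X=(X^{(1)},\ldots,X^{(p)})$ is a vector of real covariates, $D\in\{0,1\}$ is a binary treatment with $\omega=P(D=1)\in(0,1)$, and $Y$ is a real outcome; $p=p_n$ may grow with $n$. For $j=1,\ldots,p$ let $\rho_j=BCov^2(X^{(j)},Y\mid D)$ be the population conditional ball covariance and $\widehat\rho_j=BCov_n^2(X^{(j)},Y\mid D)$ its empirical version, and let $\mathcal{K}$ be the set of the $q$ indices $j$ with the largest values of $\widehat\rho_j$. Let $\mathcal{A}=\mathcal{C}\cup\mathcal{P}$ be the target adjustment set (confounders and precision variables). Assume: (A1) there exist constants $c>0$ and $0\le\kappa<1/2$ such that $\min_{j\in\mathcal{C}\cup\mathcal{P}}\rho_j\ge 2cn^{-\kappa}$; (A2) $\log(p)=o(n^{1-2\kappa})$. Let $W=\{j:\rho_j=0\}$ and assume $|W^c|\le q$, where $|\cdot|$ denotes cardinality. Then $P\big(\max_{j\in W}\widehat\rho_j<\min_{j\in\mathcal{A}}\widehat\rho_j\big)\to 1$ and hence $P\big((X^{\mathcal{C}}\cup X^{\mathcal{P}})\subset \mathcal{K}\big)\to1$ as $n\to\infty$.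
   Context: Ball covariance: for random elements $X,Y$ in metric spaces $(\mathcal{X},\rho)$, $(\mathcal{Y},\zeta)$ (here real lines with absolute-value distance), with joint law $\theta$ and marginals $\mu,\nu$, let $\overline B_\rho(x_1,x_2)$ be the closed ball centered at $x_1$ with radius $\rho(x_1,x_2)$ (similarly $\overline B_\zeta(y_1,y_2)$). Then $BCov^2(X,Y)=\int(\theta-\mu\otimes\nu)^2\{\overline B_\rho(x_1,x_2)\times\overline B_\zeta(y_1,y_2)\}\,\theta(dx_1,dy_1)\theta(dx_2,dy_2)$. Given a sample, let $\delta^X_{ij,k}=I\{X_k\in\overline B_\rho(X_i,X_j)\}$, $\delta^X_{ij,kl}=\delta^X_{ij,k}\delta^X_{ij,l}$, $\xi^X_{ij,klst}=(\delta^X_{ij,kl}+\delta^X_{ij,st}-\delta^X_{ij,ks}-\delta^X_{ij,lt})/2$, and similarly for $Y$. Conditional ball covariance: with $(X^{[d]},Y^{[d]})$ distributed as $(X,Y)$ given $D=d$, $BCov^2(X,Y\mid D)=\omega BCov^2(X^{[1]},Y^{[1]})+(1-\omega)BCov^2(X^{[0]},Y^{[0]})$. Empirical version: with $n_1=\sum_iD_i$, $n_0=n-n_1$, $\widehat\omega=n_1/n$, $BCov_n^2(X,Y\mid D)=\widehat\omega\, n_1^{-6}\sum_{(i,j,k,l,s,t):\,D_i=D_j=D_k=D_l=D_s=D_t=1}\xi^X_{ij,klst}\xi^Y_{ij,klst}+(1-\widehat\omega)\,n_0^{-6}\sum_{(i,j,k,l,s,t):\,D_i=\cdots=D_t=0}\xi^X_{ij,klst}\xi^Y_{ij,klst}$.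 Target set: the causal relationships among $(X,D,Y)$ are represented by a causal DAG; $pa(Y)$ denotes the parents of $Y$. The confounders are $X^{\mathcal{C}}=\{X^{(j)}\in pa(Y): D$ and $X^{(j)}$ are d-connected given $pa(Y)\setminus\{X^{(j)}\}\}$, the precision variables $X^{\mathcal{P}}$ are the remaining covariates in $pa(Y)$, and $\mathcal{A}=\mathcal{C}\cup\mathcal{P}$ (index sets). *)

theory Defs
  imports "HOL-Probability.Probability" "HOL-Library.Landau_Symbols"
begin

text \<open>One observation (X, D, Y): covariate vector (coordinates indexed by nat,
  only the first p are used), binary treatment D (True = 1), real outcome Y.\<close>
type_synonym obs = "(nat \<Rightarrow> real) \<times> bool \<times> real"

definition obs_space :: "obs measure" where
  "obs_space = (PiM UNIV (\<lambda>_::nat. (borel :: real measure))) \<Otimes>\<^sub>M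
               ((count_space UNIV :: bool measure) \<Otimes>\<^sub>M (borel :: real measure))"

definition bball :: "real \<Rightarrow> real \<Rightarrow> real set" where
  "bball a b = cball a (dist a b)"

definition bcov2 :: "(real \<times> real) measure \<Rightarrow> real" where
  "bcov2 \<theta> = (\<integral>u1. (\<integral>u2.
      (measure \<theta> (bball (fst u1) (fst u2) \<times> bball (snd u1) (snd u2))
       - measure \<theta> (bball (fst u1) (fst u2) \<times> UNIV)
         * measure \<theta> (UNIV \<times> bball (snd u1) (snd u2)))\<^sup>2 \<partial>\<theta>) \<partial>\<theta>)"

definition treat_prob :: "obs measure \<Rightarrow> real" where
  "treat_prob Q = measure Q {u \<in> space Q. fst (snd u)}"

definition cond_law :: "obs measure \<Rightarrow> nat \<Rightarrow> bool \<Rightarrow> (real \<times> real) measure" where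
  "cond_law Q j d = distr (uniform_measure Q {u \<in> space Q. fst (snd u) = d}) borel
                          (\<lambda>u. (fst u j, snd (snd u)))"

definition cbcov2 :: "obs measure \<Rightarrow> nat \<Rightarrow> real" where
  "cbcov2 Q j = treat_prob Q * bcov2 (cond_law Q j True)
              + (1 - treat_prob Q) * bcov2 (cond_law Q j False)"

definition bdelta :: "(nat \<Rightarrow> real) \<Rightarrow> nat \<Rightarrow> nat \<Rightarrow> nat \<Rightarrow> real" where
  "bdelta x i j k = (if x k \<in> bball (x i) (x j) then 1 else 0)"

definition bxi :: "(nat \<Rightarrow> real) \<Rightarrow> nat \<Rightarrow> nat \<Rightarrow> nat \<Rightarrow> nat \<Rightarrow> nat \<Rightarrow> nat \<Rightarrow> real" where
  "bxi x i j k l s t =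
     (bdelta x i j k * bdelta x i j l + bdelta x i j s * bdelta x i j t
      - bdelta x i j k * bdelta x i j s - bdelta x i j l * bdelta x i j t) / 2"

definition bcovn_grp :: "(nat \<Rightarrow> real) \<Rightarrow> (nat \<Rightarrow> real) \<Rightarrow> nat set \<Rightarrow> real" where
  "bcovn_grp x y I = (\<Sum>i\<in>I. \<Sum>j\<in>I. \<Sum>k\<in>I. \<Sum>l\<in>I. \<Sum>s\<in>I. \<Sum>t\<in>I.
        bxi x i j k l s t * bxi y i j k l s t) / real (card I) ^ 6"

definition cbcov2n :: "nat \<Rightarrow> (nat \<Rightarrow> obs) \<Rightarrow> nat \<Rightarrow> real" where
  "cbcov2n n S j =
     (let I1 = {i\<in>{..<n}. fst (snd (S i))};
          I0 = {i\<in>{..<n}. \<not> fst (snd (S i))};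
          w = real (card I1) / real n;
          x = (\<lambda>i. fst (S i) j);
          y = (\<lambda>i. snd (snd (S i)))
      in w * bcovn_grp x y I1 + (1 - w) * bcovn_grp x y I0)"

text \<open>K is a set of q indices (among 0..p-1) carrying the q largest values of r
  (any tie-breaking).\<close>
definition top_set :: "(nat \<Rightarrow> real) \<Rightarrow> nat \<Rightarrow> nat \<Rightarrow> nat set \<Rightarrow> bool" where
  "top_set r p q K \<longleftrightarrow> K \<subseteq> {..<p} \<and> card K = q \<and>
     (\<forall>j\<in>K. \<forall>i\<in>{..<p} - K. r i \<le> r j)"

end

theory Submission
  imports Defs
begin

text \<open>
  For a fixed covariate \<open>j\<close> the empirical statistic equals \<open>U\<^sub>1 / w\<^sup>5 + U\<^sub>0 / (1 - w)\<^sup>5\<close>, where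
  \<open>w\<close> is the treated fraction of the sample and \<open>U\<^sub>d\<close> is the V-statistic, over all 6-tuples of
  the whole sample, of the kernel \<open>\<xi>\<^sup>X \<xi>\<^sup>Y\<close> times the indicator that all six observations lie in
  arm \<open>d\<close>. Replacing one observation moves \<open>w\<close> by at most \<open>1/n\<close> and \<open>U\<^sub>d\<close> by at most \<open>12/n\<close>,
  so McDiarmid's inequality concentrates both around their means, and the mean of \<open>U\<^sub>d\<close> is
  \<open>P(D = d)\<^sup>6\<close> times the ball covariance of arm \<open>d\<close> up to \<open>30/n\<close>, the share of tuples with a
  repeated index. A union bound over the \<open>2p\<close> V-statistics puts every empirical value within
  \<open>c n\<^sup>-\<^sup>\<kappa>\<close> of its population value with probability at least \<open>1 - (4p + 2) exp(-\<epsilon>\<^sup>2 n / 72)\<close>,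
  which tends to one for \<open>\<epsilon>\<close> proportional to \<open>n\<^sup>-\<^sup>\<kappa>\<close> by (A2). On that event the gap
  \<open>2 c n\<^sup>-\<^sup>\<kappa>\<close> of (A1) separates the target set from \<open>W\<close>, and as at most \<open>q\<close> population values
  are nonzero, every top-\<open>q\<close> set contains the target set.
\<close>

section \<open>McDiarmid's inequality\<close>

lemma abs_integral_le_const:
  fixes f :: "'a \<Rightarrow> real"
  assumes "prob_space M" and bound: "\<And>y. y \<in> space M \<Longrightarrow> \<bar>f y\<bar> \<le> B"
  shows "\<bar>\<integral>y. f y \<partial>M\<bar> \<le> B"
proof -
  interpret prob_space M by fact
  obtain y0 where "y0 \<in> space M" using not_empty by auto
  then have "B \<ge> 0" using bound[of y0] by linarith
  show ?thesis
  proof (cases "integrable M f")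
    case True
    have "\<bar>\<integral>y. f y \<partial>M\<bar> \<le> (\<integral>y. \<bar>f y\<bar> \<partial>M)" by (rule integral_abs_bound)
    also have "\<dots> \<le> (\<integral>y. B \<partial>M)" using True bound by (intro integral_mono) auto
    finally show ?thesis by (simp add: prob_space)
  next
    case False
    with \<open>B \<ge> 0\<close> show ?thesis by (simp add: not_integrable_integral_eq)
  qed
qed

lemma integrable_bounded_prob:
  fixes f :: "'a \<Rightarrow> real"
  assumes "prob_space M" "f \<in> borel_measurable M" "\<And>y. y \<in> space M \<Longrightarrow> \<bar>f y\<bar> \<le> B"
  shows "integrable M f"
proof -
  interpret prob_space M by fact
  show ?thesis by (rule integrable_const_bound[where B=B]) (use assms in auto)
qed

lemma bounded_oscillation_imp_interval:
  fixes h :: "'a \<Rightarrow> real"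
  assumes "A \<noteq> {}" and osc: "\<And>y z. y \<in> A \<Longrightarrow> z \<in> A \<Longrightarrow> \<bar>h y - h z\<bar> \<le> c"
  shows "\<exists>a. \<forall>y\<in>A. h y \<in> {a..a + c}"
proof -
  obtain y0 where y0: "y0 \<in> A" using assms(1) by auto
  have bdd: "bdd_below (h ` A)"
    by (rule bdd_belowI[where m = "h y0 - c"]) (use osc[OF y0] in force)
  have "h y \<in> {Inf (h ` A)..Inf (h ` A) + c}" if y: "y \<in> A" for y
  proof -
    have "Inf (h ` A) \<le> h y" using y bdd by (intro cINF_lower)
    moreover have "h y - c \<le> Inf (h ` A)"
      using assms(1) osc[OF y] by (intro cINF_greatest) force+
    ultimately show ?thesis by simp
  qed
  then show ?thesis by blast
qed

lemma hoeffding_last_coordinate: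
  fixes M :: "'a measure" and f :: "(nat \<Rightarrow> 'a) \<Rightarrow> real"
  assumes "prob_space M" and "l > 0"
    and f_meas: "f \<in> borel_measurable (PiM {..<Suc n} (\<lambda>_. M))"
    and f_diff: "\<And>x i y. x \<in> space (PiM {..<Suc n} (\<lambda>_. M)) \<Longrightarrow> i < Suc n \<Longrightarrow> y \<in> space M \<Longrightarrow>
                   \<bar>f x - f (x(i := y))\<bar> \<le> c"
    and x: "x \<in> space (PiM {..<n} (\<lambda>_. M))"
  shows "(\<integral>\<^sup>+y. ennreal (exp (l * (f (x(n := y)) - (\<integral>z. f (x(n := z)) \<partial>M)))) \<partial>M)
           \<le> ennreal (exp (l\<^sup>2 * c\<^sup>2 / 8))"
proof -
  interpret M: prob_space M by fact
  have upd: "x(n := y) \<in> space (PiM {..<Suc n} (\<lambda>_. M))" if "y \<in> space M" for y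
    using that x by (auto simp: space_PiM PiE_iff extensional_def)
  have "\<exists>a. \<forall>y\<in>space M. f (x(n := y)) \<in> {a..a + c}"
  proof (rule bounded_oscillation_imp_interval[OF M.not_empty])
    fix y z assume "y \<in> space M" "z \<in> space M"
    from f_diff[OF upd[OF \<open>y \<in> space M\<close>] _ \<open>z \<in> space M\<close>, of n]
    show "\<bar>f (x(n := y)) - f (x(n := z))\<bar> \<le> c" by simp
  qed
  then obtain a where a: "\<And>y. y \<in> space M \<Longrightarrow> f (x(n := y)) \<in> {a..a + c}" by blast
  have "(\<lambda>y. f (x(n := y))) \<in> borel_measurable M"
    using x f_meas by (simp add: lessThan_Suc) measurable
  then interpret interval_bounded_random_variable M "\<lambda>y. f (x(n := y))" a "a + c"
    by unfold_locales (use a in auto)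
  from Hoeffdings_lemma_nn_integral[OF \<open>l > 0\<close>] show ?thesis by simp
qed

lemma integral_last_coordinate_bounded_differences:
  fixes M :: "'a measure" and f :: "(nat \<Rightarrow> 'a) \<Rightarrow> real"
  assumes "prob_space M"
    and f_meas: "f \<in> borel_measurable (PiM {..<Suc n} (\<lambda>_. M))"
    and f_bound: "\<And>x. x \<in> space (PiM {..<Suc n} (\<lambda>_. M)) \<Longrightarrow> \<bar>f x\<bar> \<le> B"
    and f_diff: "\<And>x i y. x \<in> space (PiM {..<Suc n} (\<lambda>_. M)) \<Longrightarrow> i < Suc n \<Longrightarrow> y \<in> space M \<Longrightarrow>
                   \<bar>f x - f (x(i := y))\<bar> \<le> c"
  defines "g \<equiv> \<lambda>x. \<integral>y. f (x(n := y)) \<partial>M"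
  shows "g \<in> borel_measurable (PiM {..<n} (\<lambda>_. M))"
    and "\<And>x. x \<in> space (PiM {..<n} (\<lambda>_. M)) \<Longrightarrow> \<bar>g x\<bar> \<le> B"
    and "\<And>x i y. x \<in> space (PiM {..<n} (\<lambda>_. M)) \<Longrightarrow> i < n \<Longrightarrow> y \<in> space M \<Longrightarrow>
           \<bar>g x - g (x(i := y))\<bar> \<le> c"
proof -
  interpret M: prob_space M by fact
  let ?P = "PiM {..<n} (\<lambda>_. M)"
  have [measurable]: "f \<in> borel_measurable (PiM (insert n {..<n}) (\<lambda>_. M))"
    using f_meas by (simp add: lessThan_Suc)
  have [measurable]: "(\<lambda>(x, y). x(n := y)) \<in> measurable (?P \<Otimes>\<^sub>M M) (PiM (insert n {..<n}) (\<lambda>_. M))"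
    using measurable_add_dim[of n "{..<n}" "\<lambda>_. M"] by simp
  show "g \<in> borel_measurable ?P"
    unfolding g_def by measurable
  have upd: "x(n := y) \<in> space (PiM {..<Suc n} (\<lambda>_. M))" if "x \<in> space ?P" "y \<in> space M" for x y
    using that by (auto simp: space_PiM PiE_iff extensional_def)
  show "\<bar>g x\<bar> \<le> B" if "x \<in> space ?P" for x
    unfolding g_def by (rule abs_integral_le_const[OF assms(1) f_bound[OF upd[OF that]]])
  show "\<bar>g x - g (x(i := y))\<bar> \<le> c" if x: "x \<in> space ?P" and i: "i < n" and y: "y \<in> space M" for x i y
  proof -
    have xi: "x(i := y) \<in> space ?P" using x y i by (auto simp: space_PiM PiE_iff extensional_def)
    have int: "integrable M (\<lambda>z. f (x'(n := z)))" if "x' \<in> space ?P" for x'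
      using that by (intro integrable_bounded_prob[OF assms(1) _ f_bound[OF upd]]) measurable
    have "g x - g (x(i := y)) = (\<integral>z. f (x(n := z)) - f ((x(n := z))(i := y)) \<partial>M)"
      using Bochner_Integration.integral_diff[OF int[OF x] int[OF xi]] i
      by (simp add: g_def fun_upd_twist)
    also have "\<bar>\<dots>\<bar> \<le> c"
      using i y by (intro abs_integral_le_const[OF assms(1)] f_diff[OF upd[OF x]]) auto
    finally show ?thesis .
  qed
qed

lemma mcdiarmid_mgf:
  fixes M :: "'a measure" and f :: "(nat \<Rightarrow> 'a) \<Rightarrow> real"
  assumes "prob_space M" and "l > 0"
    and "f \<in> borel_measurable (PiM {..<n} (\<lambda>_. M))"
    and "\<And>x. x \<in> space (PiM {..<n} (\<lambda>_. M)) \<Longrightarrow> \<bar>f x\<bar> \<le> B"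
    and "\<And>x i y. x \<in> space (PiM {..<n} (\<lambda>_. M)) \<Longrightarrow> i < n \<Longrightarrow> y \<in> space M \<Longrightarrow>
           \<bar>f x - f (x(i := y))\<bar> \<le> c"
  shows "(\<integral>\<^sup>+x. ennreal (exp (l * (f x - (\<integral>x. f x \<partial>PiM {..<n} (\<lambda>_. M))))) \<partial>PiM {..<n} (\<lambda>_. M))
           \<le> ennreal (exp (l\<^sup>2 * (real n * c\<^sup>2) / 8))"
  using assms(3-5)
proof (induction n arbitrary: f)
  case 0
  interpret P: prob_space "PiM {..<0::nat} (\<lambda>_. M)" by (intro prob_space_PiM assms(1))
  have "space (PiM {..<0::nat} (\<lambda>_. M)) = {\<lambda>_. undefined}" by (simp add: space_PiM)
  then have "(\<integral>x. f x \<partial>PiM {..<0::nat} (\<lambda>_. M)) = f (\<lambda>_. undefined)"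
    using P.prob_space by (subst Bochner_Integration.integral_cong[of _ _ _ "\<lambda>_. f (\<lambda>_. undefined)"]) auto
  then have "(\<integral>\<^sup>+x. ennreal (exp (l * (f x - (\<integral>x. f x \<partial>PiM {..<0::nat} (\<lambda>_. M))))) \<partial>PiM {..<0::nat} (\<lambda>_. M))
      = (\<integral>\<^sup>+x. 1 \<partial>PiM {..<0::nat} (\<lambda>_. M))"
    by (intro nn_integral_cong) (auto simp: space_PiM)
  then show ?case using P.emeasure_space_1 by (simp del: lessThan_0)
next
  case (Suc n)
  interpret M: prob_space M by fact
  interpret PS: product_prob_space "\<lambda>_. M" UNIV by unfold_locales
  let ?P = "PiM {..<n} (\<lambda>_. M)" and ?PS = "PiM {..<Suc n} (\<lambda>_. M)"
  interpret P: prob_space ?P by (intro prob_space_PiM assms(1))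
  interpret PS': prob_space ?PS by (intro prob_space_PiM assms(1))
  define g where "g x = (\<integral>y. f (x(n := y)) \<partial>M)" for x
  note g = integral_last_coordinate_bounded_differences[OF assms(1) Suc.prems, folded g_def]
  have [measurable]: "f \<in> borel_measurable (PiM (insert n {..<n}) (\<lambda>_. M))" "g \<in> borel_measurable ?P"
    using Suc.prems(1) g(1) by (simp_all add: lessThan_Suc)
  have "integrable (PiM (insert n {..<n}) (\<lambda>_. M)) f"
    using integrable_bounded_prob[OF PS'.prob_space_axioms Suc.prems(1,2)] by (simp add: lessThan_Suc)
  then have mean_f: "(\<integral>x. f x \<partial>?PS) = (\<integral>x. g x \<partial>?P)"
    unfolding lessThan_Suc g_def by (rule PS.product_integral_insert[rotated 2]) auto
  define E where "E = (\<integral>x. g x \<partial>?P)"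
  have "(\<integral>\<^sup>+x. ennreal (exp (l * (f x - (\<integral>x. f x \<partial>?PS)))) \<partial>?PS)
      = (\<integral>\<^sup>+x. (\<integral>\<^sup>+y. ennreal (exp (l * (f (x(n := y)) - E))) \<partial>M) \<partial>?P)"
    unfolding mean_f E_def[symmetric] unfolding lessThan_Suc by (rule PS.product_nn_integral_insert) auto
  also have "\<dots> = (\<integral>\<^sup>+x. ennreal (exp (l * (g x - E))) *
                      (\<integral>\<^sup>+y. ennreal (exp (l * (f (x(n := y)) - g x))) \<partial>M) \<partial>?P)"
    by (intro nn_integral_cong, subst nn_integral_cmult[symmetric])
       (auto intro!: nn_integral_cong simp: ennreal_mult'[symmetric] exp_add[symmetric] algebra_simps)
  also have "\<dots> \<le> (\<integral>\<^sup>+x. ennreal (exp (l * (g x - E))) * ennreal (exp (l\<^sup>2 * c\<^sup>2 / 8)) \<partial>?P)"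
    unfolding g_def
    by (intro nn_integral_mono mult_left_mono hoeffding_last_coordinate[OF assms(1,2) Suc.prems(1,3)]) auto
  also have "\<dots> = (\<integral>\<^sup>+x. ennreal (exp (l * (g x - E))) \<partial>?P) * ennreal (exp (l\<^sup>2 * c\<^sup>2 / 8))"
    by (rule nn_integral_multc) measurable
  also have "\<dots> \<le> ennreal (exp (l\<^sup>2 * (real n * c\<^sup>2) / 8)) * ennreal (exp (l\<^sup>2 * c\<^sup>2 / 8))"
    using Suc.IH[OF g] unfolding E_def by (intro mult_right_mono) auto
  also have "\<dots> = ennreal (exp (l\<^sup>2 * (real (Suc n) * c\<^sup>2) / 8))"
    by (simp add: ennreal_mult'[symmetric] exp_add[symmetric] algebra_simps add_divide_distrib)
  finally show ?case .
qed

lemma mcdiarmid_upper_tail: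
  fixes M :: "'a measure" and f :: "(nat \<Rightarrow> 'a) \<Rightarrow> real"
  assumes M: "prob_space M" and "c > 0" "n > 0" "\<epsilon> > 0"
    and f_meas: "f \<in> borel_measurable (PiM {..<n} (\<lambda>_. M))"
    and f_bound: "\<And>x. x \<in> space (PiM {..<n} (\<lambda>_. M)) \<Longrightarrow> \<bar>f x\<bar> \<le> B"
    and f_diff: "\<And>x i y. x \<in> space (PiM {..<n} (\<lambda>_. M)) \<Longrightarrow> i < n \<Longrightarrow> y \<in> space M \<Longrightarrow>
                   \<bar>f x - f (x(i := y))\<bar> \<le> c"
  shows "measure (PiM {..<n} (\<lambda>_. M))
           {x \<in> space (PiM {..<n} (\<lambda>_. M)). f x - (\<integral>x. f x \<partial>PiM {..<n} (\<lambda>_. M)) \<ge> \<epsilon>}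
         \<le> exp (-2 * \<epsilon>\<^sup>2 / (real n * c\<^sup>2))"
proof -
  let ?P = "PiM {..<n} (\<lambda>_. M)"
  interpret P: prob_space ?P by (intro prob_space_PiM M)
  define E where "E = (\<integral>x. f x \<partial>?P)"
  define v where "v = real n * c\<^sup>2"
  have "v > 0" using assms(2,3) by (simp add: v_def)
  define l where "l = 4 * \<epsilon> / v"
  have "l > 0" using \<open>\<epsilon> > 0\<close> \<open>v > 0\<close> by (simp add: l_def)
  have [measurable]: "f \<in> borel_measurable ?P" by (rule f_meas)
  have "emeasure ?P {x \<in> space ?P. f x - E \<ge> \<epsilon>}
     \<le> ennreal (exp (-l * \<epsilon>)) * (\<integral>\<^sup>+x. ennreal (exp (l * (f x - E))) * indicator (space ?P) x \<partial>?P)"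
    by (intro Chernoff_ineq_nn_integral_ge \<open>l > 0\<close>) auto
  also have "(\<integral>\<^sup>+x. ennreal (exp (l * (f x - E))) * indicator (space ?P) x \<partial>?P)
           = (\<integral>\<^sup>+x. ennreal (exp (l * (f x - E))) \<partial>?P)"
    by (intro nn_integral_cong) simp
  also have "ennreal (exp (-l * \<epsilon>)) * \<dots> \<le> ennreal (exp (-l * \<epsilon>)) * ennreal (exp (l\<^sup>2 * v / 8))"
    unfolding E_def v_def
    by (intro mult_left_mono mcdiarmid_mgf[OF M \<open>l > 0\<close> f_meas f_bound f_diff]) auto
  also have "-l * \<epsilon> + l\<^sup>2 * v / 8 = -2 * \<epsilon>\<^sup>2 / v"
    using \<open>v > 0\<close> by (simp add: l_def field_simps power2_eq_square)
  then have "ennreal (exp (-l * \<epsilon>)) * ennreal (exp (l\<^sup>2 * v / 8)) = ennreal (exp (-2 * \<epsilon>\<^sup>2 / v))"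
    by (simp add: ennreal_mult'[symmetric] exp_add[symmetric])
  finally show ?thesis
    unfolding E_def v_def by (simp add: P.emeasure_eq_measure)
qed

theorem mcdiarmid_inequality:
  fixes M :: "'a measure" and f :: "(nat \<Rightarrow> 'a) \<Rightarrow> real"
  assumes M: "prob_space M" and c: "c > 0" and n: "n > 0" and \<epsilon>: "\<epsilon> > 0"
    and f_meas: "f \<in> borel_measurable (PiM {..<n} (\<lambda>_. M))"
    and f_bound: "\<And>x. x \<in> space (PiM {..<n} (\<lambda>_. M)) \<Longrightarrow> \<bar>f x\<bar> \<le> B"
    and f_diff: "\<And>x i y. x \<in> space (PiM {..<n} (\<lambda>_. M)) \<Longrightarrow> i < n \<Longrightarrow> y \<in> space M \<Longrightarrow>
                   \<bar>f x - f (x(i := y))\<bar> \<le> c"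
  shows "measure (PiM {..<n} (\<lambda>_. M))
           {x \<in> space (PiM {..<n} (\<lambda>_. M)). \<bar>f x - (\<integral>x. f x \<partial>PiM {..<n} (\<lambda>_. M))\<bar> \<ge> \<epsilon>}
         \<le> 2 * exp (-2 * \<epsilon>\<^sup>2 / (real n * c\<^sup>2))"
proof -
  let ?P = "PiM {..<n} (\<lambda>_. M)"
  interpret P: prob_space ?P by (intro prob_space_PiM M)
  have [measurable]: "f \<in> borel_measurable ?P" by (rule f_meas)
  have "{x \<in> space ?P. \<bar>f x - (\<integral>x. f x \<partial>?P)\<bar> \<ge> \<epsilon>} =
        {x \<in> space ?P. f x - (\<integral>x. f x \<partial>?P) \<ge> \<epsilon>} \<union> {x \<in> space ?P. - f x - (\<integral>x. - f x \<partial>?P) \<ge> \<epsilon>}"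
    by auto
  also have "P.prob \<dots> \<le> P.prob {x \<in> space ?P. f x - (\<integral>x. f x \<partial>?P) \<ge> \<epsilon>}
                        + P.prob {x \<in> space ?P. - f x - (\<integral>x. - f x \<partial>?P) \<ge> \<epsilon>}"
    by (intro measure_Un_le) auto
  also have "\<dots> \<le> exp (-2 * \<epsilon>\<^sup>2 / (real n * c\<^sup>2)) + exp (-2 * \<epsilon>\<^sup>2 / (real n * c\<^sup>2))"
    using f_bound f_diff
    by (intro add_mono mcdiarmid_upper_tail[OF M c n \<epsilon>, where B = B]) (auto simp: abs_minus_commute)
  finally show ?thesis by simp
qed

section \<open>Integrals over distinct coordinates of a product\<close>

lemma integral_PiM_resample:
  fixes M :: "'a measure" and g :: "('i \<Rightarrow> 'a) \<Rightarrow> real"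
  assumes M: "prob_space M" and I: "finite I" "i \<in> I"
    and g_meas: "g \<in> borel_measurable (PiM I (\<lambda>_. M))"
    and g_bound: "\<And>x. x \<in> space (PiM I (\<lambda>_. M)) \<Longrightarrow> \<bar>g x\<bar> \<le> B"
  shows "(\<integral>x. g x \<partial>PiM I (\<lambda>_. M)) = (\<integral>x. (\<integral>y. g (x(i := y)) \<partial>M) \<partial>PiM I (\<lambda>_. M))"
proof -
  interpret M: prob_space M by fact
  interpret PS: product_prob_space "\<lambda>_. M" UNIV by unfold_locales
  interpret P: prob_space "PiM I (\<lambda>_. M)" by (intro prob_space_PiM M)
  define I' where "I' = I - {i}"
  have I': "I = insert i I'" "i \<notin> I'" "finite I'" using I by (auto simp: I'_def)
  define G where "G x = (\<integral>y. g (x(i := y)) \<partial>M)" for x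
  have "(\<lambda>(x, y). x(i := y)) \<in> measurable (PiM I (\<lambda>_. M) \<Otimes>\<^sub>M M) (PiM I (\<lambda>_. M))"
    using measurable_add_dim[of i I "\<lambda>_. M"] I by (simp add: insert_absorb)
  from measurable_comp[OF this g_meas]
  have "G \<in> borel_measurable (PiM I (\<lambda>_. M))"
    unfolding G_def by (intro M.borel_measurable_lebesgue_integral) (simp add: comp_def case_prod_beta')
  moreover have "\<bar>G x\<bar> \<le> B" if "x \<in> space (PiM I (\<lambda>_. M))" for x
    unfolding G_def using that I
    by (intro abs_integral_le_const[OF M] g_bound) (auto simp: space_PiM PiE_iff extensional_def)
  ultimately have "integrable (PiM (insert i I') (\<lambda>_. M)) G"
    using integrable_bounded_prob[OF P.prob_space_axioms] I' by metis
  moreover have "integrable (PiM (insert i I') (\<lambda>_. M)) g"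
    using integrable_bounded_prob[OF P.prob_space_axioms g_meas g_bound] I' by simp
  ultimately have "(\<integral>x. G x \<partial>PiM I (\<lambda>_. M)) = (\<integral>x. (\<integral>z. G (x(i := z)) \<partial>M) \<partial>PiM I' (\<lambda>_. M))"
    and "(\<integral>x. g x \<partial>PiM I (\<lambda>_. M)) = (\<integral>x. (\<integral>y. g (x(i := y)) \<partial>M) \<partial>PiM I' (\<lambda>_. M))"
    unfolding I'(1) by (simp_all only: PS.product_integral_insert[OF I'(3,2)])
  \<comment> \<open>\<open>G\<close> does not depend on coordinate \<open>i\<close>, so integrating it over that coordinate again changes nothing\<close>
  then show ?thesis by (simp add: G_def M.prob_space)
qed

lemma measurable_compose6:
  fixes h :: "'a \<Rightarrow> 'a \<Rightarrow> 'a \<Rightarrow> 'a \<Rightarrow> 'a \<Rightarrow> 'a \<Rightarrow> real"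
  assumes hm: "(\<lambda>w. h (fst w) (fst (snd w)) (fst (snd (snd w))) (fst (snd (snd (snd w))))
                 (fst (snd (snd (snd (snd w))))) (snd (snd (snd (snd (snd w))))))
               \<in> borel_measurable (M \<Otimes>\<^sub>M (M \<Otimes>\<^sub>M (M \<Otimes>\<^sub>M (M \<Otimes>\<^sub>M (M \<Otimes>\<^sub>M M)))))"
    and [measurable]: "f1 \<in> measurable N M" "f2 \<in> measurable N M" "f3 \<in> measurable N M"
      "f4 \<in> measurable N M" "f5 \<in> measurable N M" "f6 \<in> measurable N M"
  shows "(\<lambda>x. h (f1 x) (f2 x) (f3 x) (f4 x) (f5 x) (f6 x)) \<in> borel_measurable N"
proof -
  have "(\<lambda>x. (f1 x, f2 x, f3 x, f4 x, f5 x, f6 x)) \<in> measurable N (M \<Otimes>\<^sub>M (M \<Otimes>\<^sub>M (M \<Otimes>\<^sub>M (M \<Otimes>\<^sub>M (M \<Otimes>\<^sub>M M)))))"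
    by measurable
  from measurable_comp[OF this hm] show ?thesis by (simp add: comp_def)
qed

lemma integral_PiM_distinct6:
  fixes M :: "'a measure" and h :: "'a \<Rightarrow> 'a \<Rightarrow> 'a \<Rightarrow> 'a \<Rightarrow> 'a \<Rightarrow> 'a \<Rightarrow> real"
  assumes M: "prob_space M" and I: "finite I"
    and distinct: "distinct [i1, i2, i3, i4, i5, i6]" and sub: "{i1, i2, i3, i4, i5, i6} \<subseteq> I"
    and h_meas: "(\<lambda>w. h (fst w) (fst (snd w)) (fst (snd (snd w))) (fst (snd (snd (snd w))))
                 (fst (snd (snd (snd (snd w))))) (snd (snd (snd (snd (snd w))))))
               \<in> borel_measurable (M \<Otimes>\<^sub>M (M \<Otimes>\<^sub>M (M \<Otimes>\<^sub>M (M \<Otimes>\<^sub>M (M \<Otimes>\<^sub>M M)))))"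
    and h_bound: "\<And>u1 u2 u3 u4 u5 u6. u1 \<in> space M \<Longrightarrow> u2 \<in> space M \<Longrightarrow> u3 \<in> space M \<Longrightarrow>
       u4 \<in> space M \<Longrightarrow> u5 \<in> space M \<Longrightarrow> u6 \<in> space M \<Longrightarrow> \<bar>h u1 u2 u3 u4 u5 u6\<bar> \<le> B"
  shows "(\<integral>S. h (S i1) (S i2) (S i3) (S i4) (S i5) (S i6) \<partial>PiM I (\<lambda>_. M)) =
         (\<integral>u1. \<integral>u2. \<integral>u3. \<integral>u4. \<integral>u5. \<integral>u6. h u1 u2 u3 u4 u5 u6 \<partial>M \<partial>M \<partial>M \<partial>M \<partial>M \<partial>M)"
proof -
  interpret M: prob_space M by fact
  let ?P = "PiM I (\<lambda>_. M)"
  interpret P: prob_space ?P by (intro prob_space_PiM M)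
  note [measurable (raw)] = measurable_compose6[OF h_meas]
  have i: "i1 \<in> I" "i2 \<in> I" "i3 \<in> I" "i4 \<in> I" "i5 \<in> I" "i6 \<in> I" using sub by auto
  have space: "S i \<in> space M" if "S \<in> space ?P" "i \<in> I" for S i using that by (auto simp: space_PiM)
  have [measurable]: "(\<lambda>S. S i) \<in> measurable ?P M" if "i \<in> I" for i using that by measurable
  have ne: "i1 \<noteq> i2" "i1 \<noteq> i3" "i1 \<noteq> i4" "i1 \<noteq> i5" "i1 \<noteq> i6" "i2 \<noteq> i3" "i2 \<noteq> i4" "i2 \<noteq> i5"
    "i2 \<noteq> i6" "i3 \<noteq> i4" "i3 \<noteq> i5" "i3 \<noteq> i6" "i4 \<noteq> i5" "i4 \<noteq> i6" "i5 \<noteq> i6"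
    using distinct by auto
  define g5 where "g5 u1 u2 u3 u4 u5 = (\<integral>u6. h u1 u2 u3 u4 u5 u6 \<partial>M)" for u1 u2 u3 u4 u5
  define g4 where "g4 u1 u2 u3 u4 = (\<integral>u5. g5 u1 u2 u3 u4 u5 \<partial>M)" for u1 u2 u3 u4
  define g3 where "g3 u1 u2 u3 = (\<integral>u4. g4 u1 u2 u3 u4 \<partial>M)" for u1 u2 u3
  define g2 where "g2 u1 u2 = (\<integral>u3. g3 u1 u2 u3 \<partial>M)" for u1 u2
  define g1 where "g1 u1 = (\<integral>u2. g2 u1 u2 \<partial>M)" for u1
  note g_defs = g1_def g2_def g3_def g4_def g5_def
  have bound5: "\<bar>g5 u1 u2 u3 u4 u5\<bar> \<le> B"
    if "u1 \<in> space M" "u2 \<in> space M" "u3 \<in> space M" "u4 \<in> space M" "u5 \<in> space M" for u1 u2 u3 u4 u5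
    using that unfolding g5_def by (intro abs_integral_le_const[OF M] h_bound)
  have bound4: "\<bar>g4 u1 u2 u3 u4\<bar> \<le> B"
    if "u1 \<in> space M" "u2 \<in> space M" "u3 \<in> space M" "u4 \<in> space M" for u1 u2 u3 u4
    using that unfolding g4_def by (intro abs_integral_le_const[OF M] bound5)
  have bound3: "\<bar>g3 u1 u2 u3\<bar> \<le> B" if "u1 \<in> space M" "u2 \<in> space M" "u3 \<in> space M" for u1 u2 u3
    using that unfolding g3_def by (intro abs_integral_le_const[OF M] bound4)
  have bound2: "\<bar>g2 u1 u2\<bar> \<le> B" if "u1 \<in> space M" "u2 \<in> space M" for u1 u2
    using that unfolding g2_def by (intro abs_integral_le_const[OF M] bound3)
  have bound1: "\<bar>g1 u1\<bar> \<le> B" if "u1 \<in> space M" for u1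
    using that unfolding g1_def by (intro abs_integral_le_const[OF M] bound2)
  note bound = bound1 bound2 bound3 bound4 bound5
  have meas: "(\<lambda>S. h (S i1) (S i2) (S i3) (S i4) (S i5) (S i6)) \<in> borel_measurable ?P"
    "(\<lambda>S. g5 (S i1) (S i2) (S i3) (S i4) (S i5)) \<in> borel_measurable ?P"
    "(\<lambda>S. g4 (S i1) (S i2) (S i3) (S i4)) \<in> borel_measurable ?P"
    "(\<lambda>S. g3 (S i1) (S i2) (S i3)) \<in> borel_measurable ?P"
    "(\<lambda>S. g2 (S i1) (S i2)) \<in> borel_measurable ?P"
    "(\<lambda>S. g1 (S i1)) \<in> borel_measurable ?P"
    unfolding g_defs using i by measurable
  have "(\<integral>S. h (S i1) (S i2) (S i3) (S i4) (S i5) (S i6) \<partial>?P) = (\<integral>S. g5 (S i1) (S i2) (S i3) (S i4) (S i5) \<partial>?P)"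
    by (subst integral_PiM_resample[OF M I i(6) meas(1), where B = B])
       (auto simp: ne ne[symmetric] g5_def i space intro!: h_bound)
  also have "\<dots> = (\<integral>S. g4 (S i1) (S i2) (S i3) (S i4) \<partial>?P)"
    by (subst integral_PiM_resample[OF M I i(5) meas(2), where B = B])
       (auto simp: ne ne[symmetric] g4_def i space intro!: bound)
  also have "\<dots> = (\<integral>S. g3 (S i1) (S i2) (S i3) \<partial>?P)"
    by (subst integral_PiM_resample[OF M I i(4) meas(3), where B = B])
       (auto simp: ne ne[symmetric] g3_def i space intro!: bound)
  also have "\<dots> = (\<integral>S. g2 (S i1) (S i2) \<partial>?P)"
    by (subst integral_PiM_resample[OF M I i(3) meas(4), where B = B])
       (auto simp: ne ne[symmetric] g2_def i space intro!: bound)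
  also have "\<dots> = (\<integral>S. g1 (S i1) \<partial>?P)"
    by (subst integral_PiM_resample[OF M I i(2) meas(5), where B = B])
       (auto simp: ne ne[symmetric] g1_def i space intro!: bound)
  also have "\<dots> = (\<integral>u1. g1 u1 \<partial>M)"
    by (subst integral_PiM_resample[OF M I i(1) meas(6), where B = B])
       (auto simp: P.prob_space i space intro!: bound)
  finally show ?thesis unfolding g_defs .
qed

section \<open>Counting index tuples\<close>

lemma abs_power_diff_le:
  fixes a b c :: real
  assumes "\<bar>a\<bar> \<le> c" "\<bar>b\<bar> \<le> c"
  shows "\<bar>a ^ k - b ^ k\<bar> \<le> real k * c ^ (k - 1) * \<bar>a - b\<bar>"
proof (cases "c = 0 \<or> k = 0")
  case True
  with assms show ?thesis by auto
next
  case False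
  then have "c > 0" "k > 0" using assms by auto
  have "\<bar>(a / c) ^ k - (b / c) ^ k\<bar> \<le> real k * \<bar>a / c - b / c\<bar>"
    using norm_power_diff[of "a / c" "b / c" k] assms \<open>c > 0\<close> by simp
  then have "c ^ k * \<bar>(a / c) ^ k - (b / c) ^ k\<bar> \<le> c ^ k * (real k * \<bar>a / c - b / c\<bar>)"
    using \<open>c > 0\<close> by (intro mult_left_mono) auto
  moreover have "c ^ k = c ^ (k - 1) * c" using \<open>k > 0\<close> by (simp add: power_eq_if)
  ultimately show ?thesis
    using \<open>c > 0\<close> by (simp add: power_divide abs_mult field_simps flip: diff_divide_distrib)
qed

lemma power_minus_falling_factorial_le:
  fixes x :: real
  assumes "real k \<le> x"
  shows "x ^ k - (\<Prod>i<k. x - real i) \<le> real (k choose 2) * x ^ (k - 1)"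
  using assms
proof (induction k)
  case (Suc k)
  let ?P = "\<Prod>i<k. x - real i"
  have "0 \<le> ?P" using Suc.prems by (auto intro!: prod_nonneg)
  have "?P \<le> (\<Prod>i<k. x)" using Suc.prems by (intro prod_mono) auto
  then have "?P \<le> x ^ k" by simp
  have "x ^ Suc k - ?P * (x - real k) = x * (x ^ k - ?P) + real k * ?P"
    by (simp add: algebra_simps)
  also have "\<dots> \<le> x * (real (k choose 2) * x ^ (k - 1)) + real k * x ^ k"
    using Suc \<open>?P \<le> x ^ k\<close> by (intro add_mono mult_left_mono) auto
  also have "x * (real (k choose 2) * x ^ (k - 1)) = real (k choose 2) * x ^ k"
    by (cases k) auto
  also have "real (k choose 2) * x ^ k + real k * x ^ k = real (Suc k choose 2) * x ^ (Suc k - 1)"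
    by (simp add: numeral_2_eq_2 algebra_simps)
  finally show ?case by simp
qed simp

lemma prod_top_interval_eq: "k \<le> (n::nat) \<Longrightarrow> \<Prod>{n - k + 1..n} = (\<Prod>i<k. n - i)"
  by (rule prod.reindex_bij_witness[of _ "\<lambda>j. n - j" "\<lambda>i. n - i"]) auto

definition tuples6 :: "nat set \<Rightarrow> nat list set" where
  "tuples6 A = {xs. set xs \<subseteq> A \<and> length xs = 6}"

lemma finite_tuples6: "finite A \<Longrightarrow> finite (tuples6 A)"
  unfolding tuples6_def by (rule finite_lists_length_eq)

lemma card_tuples6: "finite A \<Longrightarrow> card (tuples6 A) = card A ^ 6"
  unfolding tuples6_def by (rule card_lists_length_eq)

lemma tuples6_nth: "xs \<in> tuples6 A \<Longrightarrow> k < 6 \<Longrightarrow> xs ! k \<in> A"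
  unfolding tuples6_def by auto

lemma tuples6_expand: "xs \<in> tuples6 A \<Longrightarrow> xs = [xs!0, xs!1, xs!2, xs!3, xs!4, xs!5]"
  unfolding tuples6_def by (auto simp: numeral_eq_Suc length_Suc_conv)

lemma sum_lists_length_Suc:
  assumes "finite A"
  shows "(\<Sum>xs | set xs \<subseteq> A \<and> length xs = Suc m. g xs) =
         (\<Sum>a\<in>A. \<Sum>xs | set xs \<subseteq> A \<and> length xs = m. g (a # xs))"
proof -
  have "{xs. set xs \<subseteq> A \<and> length xs = Suc m} =
        (\<lambda>(a, xs). a # xs) ` (A \<times> {xs. set xs \<subseteq> A \<and> length xs = m})"
    by (auto simp: length_Suc_conv image_iff)
  moreover have "inj_on (\<lambda>(a, xs). a # xs) (A \<times> {xs. set xs \<subseteq> A \<and> length xs = m})"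
    by (auto simp: inj_on_def)
  ultimately show ?thesis
    by (simp add: sum.reindex sum.cartesian_product case_prod_beta')
qed

lemma sum_tuples6:
  assumes "finite A"
  shows "(\<Sum>i\<in>A. \<Sum>j\<in>A. \<Sum>k\<in>A. \<Sum>l\<in>A. \<Sum>s\<in>A. \<Sum>t\<in>A. f i j k l s t) =
         (\<Sum>xs\<in>tuples6 A. f (xs!0) (xs!1) (xs!2) (xs!3) (xs!4) (xs!5))"
proof -
  have "{xs. set xs \<subseteq> A \<and> length xs = 0} = {[]}" by auto
  then show ?thesis
    unfolding tuples6_def using assms by (simp add: numeral_eq_Suc sum_lists_length_Suc)
qed

lemma card_distinct_tuples6_ge:
  "real n ^ 6 - 15 * real n ^ 5 \<le> real (card {xs. length xs = 6 \<and> distinct xs \<and> set xs \<subseteq> {..<n}})"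
proof (cases "6 \<le> n")
  case True
  then have "card {xs. length xs = 6 \<and> distinct xs \<and> set xs \<subseteq> {..<n}} = (\<Prod>i<6. n - i)"
    using card_lists_distinct_length_eq[of "{..<n}" 6] prod_top_interval_eq[OF True] by simp
  then have "real (card {xs. length xs = 6 \<and> distinct xs \<and> set xs \<subseteq> {..<n}}) = (\<Prod>i<6. real n - real i)"
    using True by (simp add: of_nat_diff)
  moreover have "real (6 choose 2 :: nat) = 15" by (simp add: choose_two)
  ultimately show ?thesis
    using power_minus_falling_factorial_le[of 6 "real n"] True by simp
next
  case False
  then have "real n ^ 5 * real n \<le> real n ^ 5 * 15" by (intro mult_left_mono) auto
  then show ?thesis by (simp add: eval_nat_numeral mult_ac)
qed

lemma sum_tuples6_change_one_index:
  fixes f g :: "nat list \<Rightarrow> real"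
  assumes "m < n" and agree: "\<And>xs. xs \<in> tuples6 ({..<n} - {m}) \<Longrightarrow> f xs = g xs"
    and "\<And>xs. \<bar>f xs\<bar> \<le> 1" "\<And>xs. \<bar>g xs\<bar> \<le> 1"
  shows "\<bar>(\<Sum>xs\<in>tuples6 {..<n}. f xs) - (\<Sum>xs\<in>tuples6 {..<n}. g xs)\<bar> \<le> 12 * real n ^ 5"
proof -
  let ?T = "tuples6 {..<n}" and ?T' = "tuples6 ({..<n} - {m})"
  have sub: "?T' \<subseteq> ?T" unfolding tuples6_def by auto
  have "(\<Sum>xs\<in>?T. f xs) - (\<Sum>xs\<in>?T. g xs) = (\<Sum>xs\<in>?T - ?T'. f xs - g xs)"
    unfolding sum_subtractf[symmetric] using agree finite_tuples6[of "{..<n}"]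
    by (intro sum.mono_neutral_right) auto
  also have "\<bar>\<dots>\<bar> \<le> (\<Sum>xs\<in>?T - ?T'. 2)"
    using assms(3,4) by (intro order_trans[OF sum_abs sum_mono]) (smt (verit))
  also have "\<dots> = 2 * (real n ^ 6 - real (n - 1) ^ 6)"
    using \<open>m < n\<close> card_mono[OF finite_tuples6 sub]
    by (simp add: card_Diff_subset[OF finite_subset[OF sub finite_tuples6] sub] card_tuples6 of_nat_diff)
  also have "\<dots> \<le> 2 * (6 * real n ^ 5)"
    using abs_power_diff_le[of "real n" "real n" "real (n - 1)" 6] \<open>m < n\<close> by (simp add: of_nat_diff)
  finally show ?thesis by simp
qed

lemma average_tuples6_close:
  fixes f :: "nat list \<Rightarrow> real"
  assumes "n > 0" and distinct: "\<And>xs. xs \<in> tuples6 {..<n} \<Longrightarrow> distinct xs \<Longrightarrow> f xs = c"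
    and "\<And>xs. \<bar>f xs\<bar> \<le> 1" "\<bar>c\<bar> \<le> 1"
  shows "\<bar>(\<Sum>xs\<in>tuples6 {..<n}. f xs) / real n ^ 6 - c\<bar> \<le> 30 / real n"
proof -
  let ?T = "tuples6 {..<n}" and ?D = "{xs. length xs = 6 \<and> distinct xs \<and> set xs \<subseteq> {..<n}}"
  have sub: "?D \<subseteq> ?T" unfolding tuples6_def by auto
  have "(\<Sum>xs\<in>?T. f xs) / real n ^ 6 - c = (\<Sum>xs\<in>?T. f xs - c) / real n ^ 6"
    using \<open>n > 0\<close> by (simp add: sum_subtractf card_tuples6 diff_divide_distrib)
  also have "(\<Sum>xs\<in>?T. f xs - c) = (\<Sum>xs\<in>?T - ?D. f xs - c)"
    using distinct finite_tuples6[of "{..<n}"] unfolding tuples6_def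
    by (intro sum.mono_neutral_right) auto
  finally have eq: "(\<Sum>xs\<in>?T. f xs) / real n ^ 6 - c = (\<Sum>xs\<in>?T - ?D. f xs - c) / real n ^ 6" .
  have "\<bar>\<Sum>xs\<in>?T - ?D. f xs - c\<bar> \<le> (\<Sum>xs\<in>?T - ?D. 2)"
    using assms(3,4) by (intro order_trans[OF sum_abs sum_mono]) (smt (verit))
  also have "\<dots> = 2 * (real n ^ 6 - real (card ?D))"
    using card_mono[OF finite_tuples6 sub]
    by (simp add: card_Diff_subset[OF finite_subset[OF sub finite_tuples6] sub] card_tuples6 of_nat_diff)
  also have "\<dots> \<le> 30 * real n ^ 5"
    using card_distinct_tuples6_ge[of n] by simp
  finally have "\<bar>\<Sum>xs\<in>?T - ?D. f xs - c\<bar> / real n ^ 6 \<le> 30 * real n ^ 5 / real n ^ 6"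
    by (intro divide_right_mono) auto
  also have "\<dots> = 30 / real n"
    using \<open>n > 0\<close> by (simp add: eval_nat_numeral field_simps)
  finally show ?thesis unfolding eq abs_divide by simp
qed

section \<open>Perturbation of ratios\<close>

text \<open>For \<open>N \<ge> w/2\<close>, \<open>32 / w\<^sup>5\<close> bounds \<open>1 / N\<^sup>5\<close>, and \<open>2560 = w \<cdot> 5 (2w)\<^sup>4 / (w/2)\<^sup>5\<close> comes from
  the Lipschitz constant of \<open>x\<^sup>5\<close> on \<open>[0, 2w]\<close>.\<close>

definition ratio_const :: "real \<Rightarrow> real" where
  "ratio_const w = 32 / w ^ 5 + 2560"

lemma ratio_const_antimono: "0 < m \<Longrightarrow> m \<le> w \<Longrightarrow> ratio_const w \<le> ratio_const m"
  unfolding ratio_const_def by (simp add: divide_left_mono power_mono)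

lemma ratio_const_pos: "0 < w \<Longrightarrow> 0 < ratio_const w"
  unfolding ratio_const_def by (simp add: add_pos_pos)

lemma ratio_perturbation_bound:
  fixes w r N U \<eta> :: real
  assumes w: "0 < w" "w \<le> 1" and r: "0 \<le> r" "r \<le> 1"
    and N: "\<bar>N - w\<bar> \<le> \<eta>" and U: "\<bar>U - w ^ 6 * r\<bar> \<le> \<eta>" and \<eta>: "\<eta> \<le> w / 2"
  shows "\<bar>U / N ^ 5 - w * r\<bar> \<le> ratio_const w * \<eta>"
proof -
  have "\<eta> \<ge> 0" using N by linarith
  have N_bounds: "w / 2 \<le> N" "N \<le> 2 * w" using N \<eta> w by (simp_all add: abs_le_iff)
  then have "N > 0" using w by simp
  have N5: "(w / 2) ^ 5 \<le> N ^ 5" using N_bounds w by (intro power_mono) auto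
  have split: "U / N ^ 5 - w * r = (U - w ^ 6 * r) / N ^ 5 + r * w * (w ^ 5 - N ^ 5) / N ^ 5"
    using \<open>N > 0\<close> by (simp add: field_simps eval_nat_numeral)
  have "\<bar>(U - w ^ 6 * r) / N ^ 5\<bar> \<le> \<eta> / (w / 2) ^ 5"
    using U N5 w \<open>N > 0\<close> \<open>\<eta> \<ge> 0\<close> by (simp add: abs_divide frac_le)
  also have "\<dots> = 32 / w ^ 5 * \<eta>" by (simp add: field_simps eval_nat_numeral)
  finally have first: "\<bar>(U - w ^ 6 * r) / N ^ 5\<bar> \<le> 32 / w ^ 5 * \<eta>" .
  have "\<bar>w ^ 5 - N ^ 5\<bar> \<le> 5 * (2 * w) ^ 4 * \<bar>w - N\<bar>"
    using abs_power_diff_le[of w "2 * w" N 5] w N_bounds \<open>N > 0\<close> by simp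
  also have "\<dots> \<le> 5 * (2 * w) ^ 4 * \<eta>" using N by (intro mult_left_mono) (auto simp: abs_minus_commute)
  finally have "\<bar>r * w\<bar> * \<bar>w ^ 5 - N ^ 5\<bar> \<le> w * (5 * (2 * w) ^ 4 * \<eta>)"
    using r w by (intro mult_mono) (auto simp: abs_mult mult_le_one)
  then have "\<bar>r * w * (w ^ 5 - N ^ 5) / N ^ 5\<bar> \<le> w * (5 * (2 * w) ^ 4 * \<eta>) / (w / 2) ^ 5"
    using N5 w \<open>N > 0\<close> \<open>\<eta> \<ge> 0\<close> by (simp add: abs_divide abs_mult frac_le)
  also have "\<dots> = 2560 * \<eta>" using w by (simp add: field_simps eval_nat_numeral)
  finally have second: "\<bar>r * w * (w ^ 5 - N ^ 5) / N ^ 5\<bar> \<le> 2560 * \<eta>" .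
  have "\<bar>U / N ^ 5 - w * r\<bar> \<le> \<bar>(U - w ^ 6 * r) / N ^ 5\<bar> + \<bar>r * w * (w ^ 5 - N ^ 5) / N ^ 5\<bar>"
    unfolding split by (rule abs_triangle_ineq)
  then show ?thesis
    using first second unfolding ratio_const_def by (simp add: algebra_simps)
qed

lemma ratio_pair_perturbation_bound:
  fixes \<omega> N U1 U0 r1 r0 \<eta> :: real
  assumes \<omega>: "0 < \<omega>" "\<omega> < 1" and r: "0 \<le> r1" "r1 \<le> 1" "0 \<le> r0" "r0 \<le> 1"
    and N: "\<bar>N - \<omega>\<bar> \<le> \<eta>" and U1: "\<bar>U1 - \<omega> ^ 6 * r1\<bar> \<le> \<eta>" and U0: "\<bar>U0 - (1 - \<omega>) ^ 6 * r0\<bar> \<le> \<eta>"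
    and \<eta>: "\<eta> \<le> min \<omega> (1 - \<omega>) / 2"
  shows "\<bar>U1 / N ^ 5 + U0 / (1 - N) ^ 5 - (\<omega> * r1 + (1 - \<omega>) * r0)\<bar> \<le> 2 * ratio_const (min \<omega> (1 - \<omega>)) * \<eta>"
proof -
  let ?K = "ratio_const (min \<omega> (1 - \<omega>))"
  have "\<eta> \<ge> 0" using N by linarith
  have "\<bar>U1 / N ^ 5 - \<omega> * r1\<bar> \<le> ratio_const \<omega> * \<eta>"
    using assms by (intro ratio_perturbation_bound) auto
  also have "\<dots> \<le> ?K * \<eta>"
    using \<omega> \<open>\<eta> \<ge> 0\<close> by (intro mult_right_mono ratio_const_antimono) auto
  finally have treated: "\<bar>U1 / N ^ 5 - \<omega> * r1\<bar> \<le> ?K * \<eta>" .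
  have "\<bar>U0 / (1 - N) ^ 5 - (1 - \<omega>) * r0\<bar> \<le> ratio_const (1 - \<omega>) * \<eta>"
    using assms by (intro ratio_perturbation_bound) (auto simp: abs_minus_commute)
  also have "\<dots> \<le> ?K * \<eta>"
    using \<omega> \<open>\<eta> \<ge> 0\<close> by (intro mult_right_mono ratio_const_antimono) auto
  finally have control: "\<bar>U0 / (1 - N) ^ 5 - (1 - \<omega>) * r0\<bar> \<le> ?K * \<eta>" .
  show ?thesis using treated control by linarith
qed

section \<open>The population kernel\<close>

definition arm_ind :: "bool \<Rightarrow> obs \<Rightarrow> real" where
  "arm_ind d u = (if fst (snd u) = d then 1 else 0)"

definition bcov_kernel :: "nat \<Rightarrow> obs \<Rightarrow> obs \<Rightarrow> obs \<Rightarrow> obs \<Rightarrow> obs \<Rightarrow> obs \<Rightarrow> real" where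
  "bcov_kernel j u1 u2 u3 u4 u5 u6 =
     bxi (\<lambda>m. fst ([u1, u2, u3, u4, u5, u6] ! m) j) 0 1 2 3 4 5 *
     bxi (\<lambda>m. snd (snd ([u1, u2, u3, u4, u5, u6] ! m))) 0 1 2 3 4 5"

definition arm_kernel :: "bool \<Rightarrow> nat \<Rightarrow> obs \<Rightarrow> obs \<Rightarrow> obs \<Rightarrow> obs \<Rightarrow> obs \<Rightarrow> obs \<Rightarrow> real" where
  "arm_kernel d j u1 u2 u3 u4 u5 u6 =
     arm_ind d u1 * arm_ind d u2 * arm_ind d u3 * arm_ind d u4 * arm_ind d u5 * arm_ind d u6 *
     bcov_kernel j u1 u2 u3 u4 u5 u6"

lemma indicator_bball: "indicator (bball a b) c = (if dist a c \<le> dist a b then 1 else (0::real))"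
  by (simp add: bball_def indicator_def)

lemma bcov_kernel_factor:
  fixes j u1 u2 defines "a \<equiv> \<lambda>u. indicator (bball (fst u1 j) (fst u2 j)) (fst u j) :: real"
    and "b \<equiv> \<lambda>u. indicator (bball (snd (snd u1)) (snd (snd u2))) (snd (snd u)) :: real"
  shows "bcov_kernel j u1 u2 u3 u4 u5 u6 =
           1/4 * ((a u3 - a u6) * (b u3 - b u6)) * ((a u4 - a u5) * (b u4 - b u5))"
  unfolding bcov_kernel_def bxi_def bdelta_def a_def b_def indicator_def
  by (simp add: algebra_simps numeral_eq_Suc)

lemma abs_arm_kernel_le_1: "\<bar>arm_kernel d j u1 u2 u3 u4 u5 u6\<bar> \<le> 1"
proof -
  have diff: "\<bar>indicator A x - indicator A y :: real\<bar> \<le> 1" for A x y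
    by (simp add: indicator_def)
  have "\<bar>bcov_kernel j u1 u2 u3 u4 u5 u6\<bar> \<le> 1/4 * (1 * 1) * (1 * 1)"
    unfolding bcov_kernel_factor abs_mult by (intro mult_mono diff) auto
  moreover have "\<bar>arm_ind d u\<bar> \<le> 1" for u by (simp add: arm_ind_def)
  ultimately have "\<bar>arm_kernel d j u1 u2 u3 u4 u5 u6\<bar> \<le> 1 * 1 * 1 * 1 * 1 * 1 * 1"
    unfolding arm_kernel_def abs_mult by (intro mult_mono) auto
  then show ?thesis by simp
qed

definition ball_rect :: "real \<times> real \<Rightarrow> real \<times> real \<Rightarrow> (real \<times> real) set" where
  "ball_rect v1 v2 = bball (fst v1) (fst v2) \<times> bball (snd v1) (snd v2)"

definition ball_cyl_x :: "real \<times> real \<Rightarrow> real \<times> real \<Rightarrow> (real \<times> real) set" where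
  "ball_cyl_x v1 v2 = bball (fst v1) (fst v2) \<times> UNIV"

definition ball_cyl_y :: "real \<times> real \<Rightarrow> real \<times> real \<Rightarrow> (real \<times> real) set" where
  "ball_cyl_y v1 v2 = UNIV \<times> bball (snd v1) (snd v2)"

definition bcov_integrand :: "(real \<times> real) measure \<Rightarrow> real \<times> real \<Rightarrow> real \<times> real \<Rightarrow> real" where
  "bcov_integrand \<theta> v1 v2 =
     (measure \<theta> (ball_rect v1 v2) - measure \<theta> (ball_cyl_x v1 v2) * measure \<theta> (ball_cyl_y v1 v2))\<^sup>2"

lemma bcov2_eq_integrand: "bcov2 \<theta> = (\<integral>v1. \<integral>v2. bcov_integrand \<theta> v1 v2 \<partial>\<theta> \<partial>\<theta>)"
  unfolding bcov2_def bcov_integrand_def ball_rect_def ball_cyl_x_def ball_cyl_y_def ..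

lemma measurable_fst_borel_prod [measurable]: "(fst :: real \<times> real \<Rightarrow> real) \<in> borel_measurable borel"
  using measurable_fst[of "borel :: real measure" "borel :: real measure"] by (simp add: borel_prod)

lemma measurable_snd_borel_prod [measurable]: "(snd :: real \<times> real \<Rightarrow> real) \<in> borel_measurable borel"
  using measurable_snd[of "borel :: real measure" "borel :: real measure"] by (simp add: borel_prod)

lemma bball_borel [measurable]: "bball a b \<in> sets borel"
  unfolding bball_def by (rule borel_closed) simp

lemma ball_sets_borel [measurable]:
  "ball_rect v1 v2 \<in> sets borel" "ball_cyl_x v1 v2 \<in> sets borel" "ball_cyl_y v1 v2 \<in> sets borel"
  unfolding ball_rect_def ball_cyl_x_def ball_cyl_y_def borel_prod[symmetric]
  by (auto intro!: pair_measureI)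

lemma bcov_integrand_bounds:
  assumes "prob_space \<theta>"
  shows "0 \<le> bcov_integrand \<theta> v1 v2" "bcov_integrand \<theta> v1 v2 \<le> 1"
proof -
  interpret prob_space \<theta> by fact
  have "0 \<le> prob A" "prob A \<le> 1" for A by auto
  then have "0 \<le> prob (ball_cyl_x v1 v2) * prob (ball_cyl_y v1 v2)"
    "prob (ball_cyl_x v1 v2) * prob (ball_cyl_y v1 v2) \<le> 1"
    "0 \<le> prob (ball_rect v1 v2)" "prob (ball_rect v1 v2) \<le> 1"
    by (auto intro: mult_le_one)
  then have "\<bar>prob (ball_rect v1 v2) - prob (ball_cyl_x v1 v2) * prob (ball_cyl_y v1 v2)\<bar> \<le> 1"
    by linarith
  then show "bcov_integrand \<theta> v1 v2 \<le> 1"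
    unfolding bcov_integrand_def by (metis abs_le_square_iff abs_one one_power2)
qed (simp add: bcov_integrand_def)

lemma bcov2_bounds:
  assumes "prob_space \<theta>"
  shows "0 \<le> bcov2 \<theta>" "bcov2 \<theta> \<le> 1"
proof -
  have inner: "0 \<le> (\<integral>v2. bcov_integrand \<theta> v1 v2 \<partial>\<theta>)" "\<bar>\<integral>v2. bcov_integrand \<theta> v1 v2 \<partial>\<theta>\<bar> \<le> 1" for v1
    by (intro integral_nonneg_AE AE_I2 bcov_integrand_bounds[OF assms])
       (intro abs_integral_le_const[OF assms], use bcov_integrand_bounds[OF assms] in simp)
  show "0 \<le> bcov2 \<theta>" unfolding bcov2_eq_integrand by (auto intro: integral_nonneg_AE inner)
  have "\<bar>bcov2 \<theta>\<bar> \<le> 1" unfolding bcov2_eq_integrand by (rule abs_integral_le_const[OF assms inner(2)])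
  then show "bcov2 \<theta> \<le> 1" by simp
qed

locale covariate_arm =
  fixes Q :: "obs measure" and j :: nat and d :: bool
  assumes prob_Q: "prob_space Q" and sets_Q: "sets Q = sets obs_space"
begin

sublocale Q: prob_space Q by (rule prob_Q)

lemma measurable_covariate [measurable]: "(\<lambda>u. fst u i) \<in> borel_measurable Q"
  unfolding measurable_cong_sets[OF sets_Q refl] obs_space_def by measurable

lemma measurable_outcome [measurable]: "(\<lambda>u. snd (snd u)) \<in> borel_measurable Q"
  unfolding measurable_cong_sets[OF sets_Q refl] obs_space_def by measurable

lemma measurable_treatment [measurable]: "(\<lambda>u. fst (snd u)) \<in> measurable Q (count_space UNIV)"
  unfolding measurable_cong_sets[OF sets_Q refl] obs_space_def by measurable

lemma measurable_arm_ind [measurable]: "arm_ind d' \<in> borel_measurable Q"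
  unfolding arm_ind_def by measurable

definition in_ball_x :: "obs \<Rightarrow> obs \<Rightarrow> obs \<Rightarrow> real" where
  "in_ball_x u1 u2 u = indicator (bball (fst u1 j) (fst u2 j)) (fst u j)"

definition in_ball_y :: "obs \<Rightarrow> obs \<Rightarrow> obs \<Rightarrow> real" where
  "in_ball_y u1 u2 u = indicator (bball (snd (snd u1)) (snd (snd u2))) (snd (snd u))"

definition arm_weight :: real where
  "arm_weight = (\<integral>u. arm_ind d u \<partial>Q)"

definition mass_x :: "obs \<Rightarrow> obs \<Rightarrow> real" where
  "mass_x u1 u2 = (\<integral>u. arm_ind d u * in_ball_x u1 u2 u \<partial>Q)"

definition mass_y :: "obs \<Rightarrow> obs \<Rightarrow> real" where
  "mass_y u1 u2 = (\<integral>u. arm_ind d u * in_ball_y u1 u2 u \<partial>Q)"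

definition mass_xy :: "obs \<Rightarrow> obs \<Rightarrow> real" where
  "mass_xy u1 u2 = (\<integral>u. arm_ind d u * in_ball_x u1 u2 u * in_ball_y u1 u2 u \<partial>Q)"

definition cross_moment :: "obs \<Rightarrow> obs \<Rightarrow> real \<Rightarrow> real \<Rightarrow> real" where
  "cross_moment u1 u2 \<alpha> \<beta> =
     \<alpha> * \<beta> * arm_weight - \<alpha> * mass_y u1 u2 - \<beta> * mass_x u1 u2 + mass_xy u1 u2"

lemma integrable_arm_products:
  "integrable Q (arm_ind d)"
  "integrable Q (\<lambda>u. arm_ind d u * in_ball_x u1 u2 u)"
  "integrable Q (\<lambda>u. arm_ind d u * in_ball_y u1 u2 u)"
  "integrable Q (\<lambda>u. arm_ind d u * in_ball_x u1 u2 u * in_ball_y u1 u2 u)"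
  by (intro integrable_bounded_prob[OF prob_Q, where B = 1];
      simp add: arm_ind_def in_ball_x_def in_ball_y_def indicator_bball)+

lemma integral_arm_centered_product:
  "(\<integral>u. arm_ind d u * (\<alpha> - in_ball_x u1 u2 u) * (\<beta> - in_ball_y u1 u2 u) \<partial>Q) = cross_moment u1 u2 \<alpha> \<beta>"
proof -
  have "(\<lambda>u. arm_ind d u * (\<alpha> - in_ball_x u1 u2 u) * (\<beta> - in_ball_y u1 u2 u)) =
        (\<lambda>u. (\<alpha> * \<beta>) * arm_ind d u - \<alpha> * (arm_ind d u * in_ball_y u1 u2 u)
             - \<beta> * (arm_ind d u * in_ball_x u1 u2 u) + arm_ind d u * in_ball_x u1 u2 u * in_ball_y u1 u2 u)"
    by (auto simp: algebra_simps)
  then show ?thesis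
    using integrable_arm_products(1) integrable_arm_products(2-4)[of u1 u2]
    by (simp add: cross_moment_def arm_weight_def mass_x_def mass_y_def mass_xy_def)
qed

lemma integral_arm_cross_moment:
  "(\<integral>u. arm_ind d u * cross_moment u1 u2 (in_ball_x u1 u2 u) (in_ball_y u1 u2 u) \<partial>Q) =
     2 * (mass_xy u1 u2 * arm_weight - mass_x u1 u2 * mass_y u1 u2)"
proof -
  have "(\<lambda>u. arm_ind d u * cross_moment u1 u2 (in_ball_x u1 u2 u) (in_ball_y u1 u2 u)) =
        (\<lambda>u. (arm_ind d u * in_ball_x u1 u2 u * in_ball_y u1 u2 u) * arm_weight
             - (arm_ind d u * in_ball_x u1 u2 u) * mass_y u1 u2
             - (arm_ind d u * in_ball_y u1 u2 u) * mass_x u1 u2 + mass_xy u1 u2 * arm_ind d u)"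
    by (auto simp: cross_moment_def algebra_simps)
  then show ?thesis
    using integrable_arm_products(1) integrable_arm_products(2-4)[of u1 u2]
    by (simp add: arm_weight_def mass_x_def mass_y_def mass_xy_def)
qed

lemma nested_integral_arm_kernel:
  "(\<integral>u1. \<integral>u2. \<integral>u3. \<integral>u4. \<integral>u5. \<integral>u6. arm_kernel d j u1 u2 u3 u4 u5 u6 \<partial>Q \<partial>Q \<partial>Q \<partial>Q \<partial>Q \<partial>Q) =
   (\<integral>u1. \<integral>u2. arm_ind d u1 * arm_ind d u2 * (mass_xy u1 u2 * arm_weight - mass_x u1 u2 * mass_y u1 u2)\<^sup>2 \<partial>Q \<partial>Q)"
proof -
  let ?a = "in_ball_x" and ?b = "in_ball_y" and ?D = "arm_ind d"
  let ?F = "\<lambda>u1 u2 u. cross_moment u1 u2 (?a u1 u2 u) (?b u1 u2 u)"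
  \<comment> \<open>For fixed \<open>u1, u2\<close> the kernel factorises over the pairs \<open>(u3, u6)\<close> and \<open>(u4, u5)\<close>;
    integrating out \<open>u6\<close> and \<open>u5\<close> turns each pair into a cross moment, and integrating these over
    \<open>u4\<close> and \<open>u3\<close> gives twice the defect \<open>mass_xy * arm_weight - mass_x * mass_y\<close> each.\<close>
  have u6: "(\<integral>u6. arm_kernel d j u1 u2 u3 u4 u5 u6 \<partial>Q) =
    (?D u1 * ?D u2 * ?D u3 * ?D u4 * ?D u5 / 4 * ((?a u1 u2 u4 - ?a u1 u2 u5) * (?b u1 u2 u4 - ?b u1 u2 u5))) * ?F u1 u2 u3"
    for u1 u2 u3 u4 u5
  proof -
    have "(\<integral>u6. arm_kernel d j u1 u2 u3 u4 u5 u6 \<partial>Q) = (\<integral>u6.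
      (?D u1 * ?D u2 * ?D u3 * ?D u4 * ?D u5 / 4 * ((?a u1 u2 u4 - ?a u1 u2 u5) * (?b u1 u2 u4 - ?b u1 u2 u5))) *
      (?D u6 * (?a u1 u2 u3 - ?a u1 u2 u6) * (?b u1 u2 u3 - ?b u1 u2 u6)) \<partial>Q)"
      unfolding arm_kernel_def bcov_kernel_factor in_ball_x_def in_ball_y_def
      by (intro Bochner_Integration.integral_cong) (auto simp: algebra_simps)
    then show ?thesis by (simp only: integral_mult_right_zero integral_arm_centered_product)
  qed
  have u5: "(\<integral>u5. \<integral>u6. arm_kernel d j u1 u2 u3 u4 u5 u6 \<partial>Q \<partial>Q) =
    (?D u1 * ?D u2 * ?D u3 * ?D u4 / 4 * ?F u1 u2 u3) * ?F u1 u2 u4" for u1 u2 u3 u4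
  proof -
    have "(\<integral>u5. \<integral>u6. arm_kernel d j u1 u2 u3 u4 u5 u6 \<partial>Q \<partial>Q) = (\<integral>u5.
      (?D u1 * ?D u2 * ?D u3 * ?D u4 / 4 * ?F u1 u2 u3) *
      (?D u5 * (?a u1 u2 u4 - ?a u1 u2 u5) * (?b u1 u2 u4 - ?b u1 u2 u5)) \<partial>Q)"
      unfolding u6 by (intro Bochner_Integration.integral_cong) (auto simp: algebra_simps)
    then show ?thesis by (simp only: integral_mult_right_zero integral_arm_centered_product)
  qed
  define \<Delta> where "\<Delta> u1 u2 = mass_xy u1 u2 * arm_weight - mass_x u1 u2 * mass_y u1 u2" for u1 u2 :: obs
  have u4: "(\<integral>u4. \<integral>u5. \<integral>u6. arm_kernel d j u1 u2 u3 u4 u5 u6 \<partial>Q \<partial>Q \<partial>Q) =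
    (?D u1 * ?D u2 * ?D u3 / 4 * ?F u1 u2 u3) * (2 * \<Delta> u1 u2)" for u1 u2 u3
  proof -
    have "(\<integral>u4. \<integral>u5. \<integral>u6. arm_kernel d j u1 u2 u3 u4 u5 u6 \<partial>Q \<partial>Q \<partial>Q) =
      (\<integral>u4. (?D u1 * ?D u2 * ?D u3 / 4 * ?F u1 u2 u3) * (?D u4 * ?F u1 u2 u4) \<partial>Q)"
      unfolding u5 by (intro Bochner_Integration.integral_cong) (auto simp: algebra_simps)
    then show ?thesis by (simp only: integral_mult_right_zero integral_arm_cross_moment \<Delta>_def)
  qed
  have u3: "(\<integral>u3. \<integral>u4. \<integral>u5. \<integral>u6. arm_kernel d j u1 u2 u3 u4 u5 u6 \<partial>Q \<partial>Q \<partial>Q \<partial>Q) =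
    ?D u1 * ?D u2 * (\<Delta> u1 u2)\<^sup>2" for u1 u2
  proof -
    have "(\<integral>u3. \<integral>u4. \<integral>u5. \<integral>u6. arm_kernel d j u1 u2 u3 u4 u5 u6 \<partial>Q \<partial>Q \<partial>Q \<partial>Q) =
      (\<integral>u3. (?D u1 * ?D u2 / 2 * \<Delta> u1 u2) * (?D u3 * ?F u1 u2 u3) \<partial>Q)"
      unfolding u4 by (intro Bochner_Integration.integral_cong) (simp_all add: field_simps)
    also have "\<dots> = (?D u1 * ?D u2 / 2 * \<Delta> u1 u2) * (2 * \<Delta> u1 u2)"
      by (simp only: integral_mult_right_zero integral_arm_cross_moment \<Delta>_def)
    finally show ?thesis by (simp add: power2_eq_square algebra_simps)
  qed
  show ?thesis unfolding u3 \<Delta>_def ..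
qed

end

locale covariate_arm_pos = covariate_arm +
  assumes arm_pos: "measure Q {u \<in> space Q. fst (snd u) = d} > 0"
begin

abbreviation "\<theta> \<equiv> cond_law Q j d"

definition arm_set :: "obs set" where
  "arm_set = {u \<in> space Q. fst (snd u) = d}"

definition pair_obs :: "obs \<Rightarrow> real \<times> real" where
  "pair_obs u = (fst u j, snd (snd u))"

lemma arm_set_sets [measurable]: "arm_set \<in> sets Q"
  unfolding arm_set_def by measurable

lemma arm_weight_eq: "arm_weight = measure Q arm_set"
proof -
  have "arm_weight = (\<integral>u. indicator arm_set u \<partial>Q)"
    unfolding arm_weight_def arm_ind_def arm_set_def
    by (intro Bochner_Integration.integral_cong) (auto simp: indicator_def)
  then show ?thesis by simp
qed

lemma arm_weight_pos: "arm_weight > 0"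
  using arm_pos by (simp add: arm_weight_eq arm_set_def)

lemma arm_weight_le_1: "arm_weight \<le> 1"
  by (simp add: arm_weight_eq)

lemma measurable_pair_obs [measurable]: "pair_obs \<in> measurable Q borel"
proof -
  have "pair_obs \<in> measurable Q (borel \<Otimes>\<^sub>M borel)" unfolding pair_obs_def by measurable
  then show ?thesis by (simp add: borel_prod)
qed

lemma cond_law_eq: "\<theta> = distr (uniform_measure Q arm_set) borel pair_obs"
  unfolding cond_law_def arm_set_def pair_obs_def ..

lemma sets_cond_law: "sets \<theta> = sets (borel \<Otimes>\<^sub>M borel)"
  by (simp add: cond_law_eq) (metis borel_prod)

lemma space_cond_law: "space \<theta> = UNIV"
  by (simp add: cond_law_eq)

lemma prob_space_cond_law: "prob_space \<theta>"
proof -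
  have "prob_space (uniform_measure Q arm_set)"
    using arm_pos by (intro prob_space_uniform_measure) (auto simp: arm_set_def Q.emeasure_eq_measure)
  then show ?thesis unfolding cond_law_eq by (intro prob_space.prob_space_distr) auto
qed

lemma integral_arm_eq_cond_law:
  fixes g :: "real \<times> real \<Rightarrow> real"
  assumes [measurable]: "g \<in> borel_measurable borel"
  shows "(\<integral>u. arm_ind d u * g (pair_obs u) \<partial>Q) = arm_weight * (\<integral>v. g v \<partial>\<theta>)"
proof -
  have density: "uniform_measure Q arm_set = density Q (\<lambda>u. ennreal (indicator arm_set u / arm_weight))"
    unfolding uniform_measure_def
  proof (intro density_cong AE_I2)
    have "1 / ennreal arm_weight = ennreal (1 / arm_weight)"
      using divide_ennreal[of 1 arm_weight] arm_weight_pos by simp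
    then show "indicator arm_set x / emeasure Q arm_set = ennreal (indicator arm_set x / arm_weight)" for x
      by (auto simp: arm_weight_eq Q.emeasure_eq_measure indicator_def)
  qed auto
  have "(\<integral>v. g v \<partial>\<theta>) = (\<integral>u. g (pair_obs u) \<partial>uniform_measure Q arm_set)"
    unfolding cond_law_eq by (rule integral_distr) auto
  also have "\<dots> = (\<integral>u. (indicator arm_set u / arm_weight) *\<^sub>R g (pair_obs u) \<partial>Q)"
    unfolding density by (rule integral_density) (use arm_weight_pos in auto)
  also have "\<dots> = (\<integral>u. (1 / arm_weight) * (arm_ind d u * g (pair_obs u)) \<partial>Q)"
    by (intro Bochner_Integration.integral_cong) (auto simp: arm_ind_def arm_set_def indicator_def)
  finally show ?thesis using arm_weight_pos by simp
qed

lemma integral_arm_indicator: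
  assumes "A \<in> sets borel"
  shows "(\<integral>u. arm_ind d u * indicator A (pair_obs u) \<partial>Q) = arm_weight * measure \<theta> A"
  using integral_arm_eq_cond_law[of "indicator A"] assms by (simp add: space_cond_law)

lemma masses_eq_cond_law:
  "mass_xy u1 u2 = arm_weight * measure \<theta> (ball_rect (pair_obs u1) (pair_obs u2))"
  "mass_x u1 u2 = arm_weight * measure \<theta> (ball_cyl_x (pair_obs u1) (pair_obs u2))"
  "mass_y u1 u2 = arm_weight * measure \<theta> (ball_cyl_y (pair_obs u1) (pair_obs u2))"
  unfolding integral_arm_indicator[OF ball_sets_borel(1), symmetric]
    integral_arm_indicator[OF ball_sets_borel(2), symmetric]
    integral_arm_indicator[OF ball_sets_borel(3), symmetric]
    mass_xy_def mass_x_def mass_y_def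
  by (auto intro!: Bochner_Integration.integral_cong
      simp: in_ball_x_def in_ball_y_def pair_obs_def ball_rect_def ball_cyl_x_def ball_cyl_y_def indicator_def)

lemma measurable_fst_cond_law [measurable]: "fst \<in> borel_measurable \<theta>"
  unfolding measurable_cong_sets[OF sets_cond_law refl] by measurable

lemma measurable_snd_cond_law [measurable]: "snd \<in> borel_measurable \<theta>"
  unfolding measurable_cong_sets[OF sets_cond_law refl] by measurable

lemma measurable_bcov_integrand:
  fixes f g :: "'x \<Rightarrow> real \<times> real"
  assumes [measurable]: "f \<in> borel_measurable N" "g \<in> borel_measurable N"
  shows "(\<lambda>w. bcov_integrand \<theta> (f w) (g w)) \<in> borel_measurable N"
proof -
  interpret T: prob_space \<theta> by (rule prob_space_cond_law)
  have mem: "v \<in> bball a b \<longleftrightarrow> dist a v \<le> dist a b" for a b v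
    by (simp add: bball_def)
  have [measurable]: "(\<lambda>w. measure \<theta> (ball_rect (f w) (g w))) \<in> borel_measurable N"
  proof (rule T.measurable_measure)
    show "{x \<in> space (N \<Otimes>\<^sub>M \<theta>). snd x \<in> ball_rect (f (fst x)) (g (fst x))} \<in> sets (N \<Otimes>\<^sub>M \<theta>)"
      unfolding ball_rect_def mem_Times_iff mem by measurable
  qed (simp add: space_cond_law)
  have [measurable]: "(\<lambda>w. measure \<theta> (ball_cyl_x (f w) (g w))) \<in> borel_measurable N"
  proof (rule T.measurable_measure)
    show "{x \<in> space (N \<Otimes>\<^sub>M \<theta>). snd x \<in> ball_cyl_x (f (fst x)) (g (fst x))} \<in> sets (N \<Otimes>\<^sub>M \<theta>)"
      unfolding ball_cyl_x_def mem_Times_iff mem by measurable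
  qed (simp add: space_cond_law)
  have [measurable]: "(\<lambda>w. measure \<theta> (ball_cyl_y (f w) (g w))) \<in> borel_measurable N"
  proof (rule T.measurable_measure)
    show "{x \<in> space (N \<Otimes>\<^sub>M \<theta>). snd x \<in> ball_cyl_y (f (fst x)) (g (fst x))} \<in> sets (N \<Otimes>\<^sub>M \<theta>)"
      unfolding ball_cyl_y_def mem_Times_iff mem by measurable
  qed (simp add: space_cond_law)
  show ?thesis unfolding bcov_integrand_def by measurable
qed


lemma measurable_bcov_inner: "(\<lambda>v1. \<integral>v2. bcov_integrand \<theta> v1 v2 \<partial>\<theta>) \<in> borel_measurable borel"
proof -
  interpret T: prob_space \<theta> by (rule prob_space_cond_law)
  have "snd \<in> measurable (borel \<Otimes>\<^sub>M \<theta>) (borel \<Otimes>\<^sub>M borel)"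
    using measurable_snd[of borel \<theta>] unfolding measurable_cong_sets[OF refl sets_cond_law] .
  then have "(\<lambda>w. bcov_integrand \<theta> (fst w) (snd w)) \<in> borel_measurable (borel \<Otimes>\<^sub>M \<theta>)"
    by (intro measurable_bcov_integrand) (simp_all add: borel_prod)
  then show ?thesis
    by (intro T.borel_measurable_lebesgue_integral) (simp add: case_prod_beta')
qed

theorem nested_integral_arm_kernel_eq_bcov2:
  "(\<integral>u1. \<integral>u2. \<integral>u3. \<integral>u4. \<integral>u5. \<integral>u6. arm_kernel d j u1 u2 u3 u4 u5 u6 \<partial>Q \<partial>Q \<partial>Q \<partial>Q \<partial>Q \<partial>Q) =
     arm_weight ^ 6 * bcov2 \<theta>"
proof -
  let ?W = arm_weight and ?D = "arm_ind d"
  have square: "(mass_xy u1 u2 * ?W - mass_x u1 u2 * mass_y u1 u2)\<^sup>2 =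
                  ?W ^ 4 * bcov_integrand \<theta> (pair_obs u1) (pair_obs u2)" for u1 u2
    unfolding masses_eq_cond_law bcov_integrand_def
    by (simp add: power2_eq_square eval_nat_numeral algebra_simps)
  have inner: "(\<integral>u2. ?D u1 * ?D u2 * (mass_xy u1 u2 * ?W - mass_x u1 u2 * mass_y u1 u2)\<^sup>2 \<partial>Q) =
      ?W ^ 5 * (?D u1 * (\<integral>v2. bcov_integrand \<theta> (pair_obs u1) v2 \<partial>\<theta>))" for u1
  proof -
    have "(\<integral>u2. ?D u2 * bcov_integrand \<theta> (pair_obs u1) (pair_obs u2) \<partial>Q) =
        ?W * (\<integral>v2. bcov_integrand \<theta> (pair_obs u1) v2 \<partial>\<theta>)"
      by (intro integral_arm_eq_cond_law measurable_bcov_integrand) auto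
    moreover have "(\<integral>u2. ?D u1 * ?D u2 * (mass_xy u1 u2 * ?W - mass_x u1 u2 * mass_y u1 u2)\<^sup>2 \<partial>Q) =
        (?D u1 * ?W ^ 4) * (\<integral>u2. ?D u2 * bcov_integrand \<theta> (pair_obs u1) (pair_obs u2) \<partial>Q)"
      unfolding square by (subst integral_mult_right_zero[symmetric]) (simp add: algebra_simps)
    ultimately show ?thesis by (simp add: eval_nat_numeral algebra_simps)
  qed
  have "(\<integral>u1. \<integral>u2. \<integral>u3. \<integral>u4. \<integral>u5. \<integral>u6. arm_kernel d j u1 u2 u3 u4 u5 u6 \<partial>Q \<partial>Q \<partial>Q \<partial>Q \<partial>Q \<partial>Q) =
        ?W ^ 5 * (\<integral>u1. ?D u1 * (\<integral>v2. bcov_integrand \<theta> (pair_obs u1) v2 \<partial>\<theta>) \<partial>Q)"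
    unfolding nested_integral_arm_kernel inner by simp
  also have "\<dots> = ?W ^ 6 * bcov2 \<theta>"
    using integral_arm_eq_cond_law[OF measurable_bcov_inner]
    by (simp add: bcov2_eq_integrand eval_nat_numeral)
  finally show ?thesis .
qed

end

section \<open>The empirical statistic as a ratio of V-statistics\<close>

definition arm_kernel_at :: "bool \<Rightarrow> nat \<Rightarrow> (nat \<Rightarrow> obs) \<Rightarrow> nat list \<Rightarrow> real" where
  "arm_kernel_at d j S xs = arm_kernel d j (S (xs!0)) (S (xs!1)) (S (xs!2)) (S (xs!3)) (S (xs!4)) (S (xs!5))"

definition arm_vstat :: "bool \<Rightarrow> nat \<Rightarrow> nat \<Rightarrow> (nat \<Rightarrow> obs) \<Rightarrow> real" where
  "arm_vstat d j n S = (\<Sum>xs\<in>tuples6 {..<n}. arm_kernel_at d j S xs) / real n ^ 6"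

definition treated_frac :: "nat \<Rightarrow> (nat \<Rightarrow> obs) \<Rightarrow> real" where
  "treated_frac n S = (\<Sum>i<n. arm_ind True (S i)) / real n"

lemma bcovn_grp_arm:
  assumes "finite I"
  shows "bcovn_grp (\<lambda>i. fst (S i) j) (\<lambda>i. snd (snd (S i))) {i\<in>I. fst (snd (S i)) = d} =
           (\<Sum>xs\<in>tuples6 I. arm_kernel_at d j S xs) / real (card {i\<in>I. fst (snd (S i)) = d}) ^ 6"
proof -
  let ?I = "{i\<in>I. fst (snd (S i)) = d}"
  let ?k = "\<lambda>xs. bcov_kernel j (S (xs!0)) (S (xs!1)) (S (xs!2)) (S (xs!3)) (S (xs!4)) (S (xs!5))"
  have arm: "tuples6 ?I = {xs \<in> tuples6 I. \<forall>k<6. fst (snd (S (xs!k))) = d}"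
    unfolding tuples6_def by (auto simp: in_set_conv_nth subset_iff) (metis (full_types))+
  have "arm_kernel_at d j S xs = (if \<forall>k<6. fst (snd (S (xs!k))) = d then ?k xs else 0)" for xs
  proof (cases "\<forall>k<6. fst (snd (S (xs!k))) = d")
    case False
    then obtain k where "k < 6" "fst (snd (S (xs!k))) \<noteq> d" by auto
    then have "k = 0 \<or> k = 1 \<or> k = 2 \<or> k = 3 \<or> k = 4 \<or> k = 5" by auto
    with \<open>fst (snd (S (xs!k))) \<noteq> d\<close> show ?thesis
      unfolding arm_kernel_at_def arm_kernel_def arm_ind_def by auto
  qed (simp add: arm_kernel_at_def arm_kernel_def arm_ind_def numeral_eq_Suc)
  then have "(\<Sum>xs\<in>tuples6 I. arm_kernel_at d j S xs) = (\<Sum>xs\<in>tuples6 ?I. ?k xs)"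
    unfolding arm sum.inter_filter[OF finite_tuples6[OF assms]] by (rule sum.cong[OF refl])
  moreover have "bxi (\<lambda>i. fst (S i) j) i1 i2 i3 i4 i5 i6 * bxi (\<lambda>i. snd (snd (S i))) i1 i2 i3 i4 i5 i6 =
                   bcov_kernel j (S i1) (S i2) (S i3) (S i4) (S i5) (S i6)" for i1 i2 i3 i4 i5 i6
    unfolding bcov_kernel_def bxi_def bdelta_def by (simp add: numeral_eq_Suc)
  ultimately show ?thesis
    using assms by (simp add: bcovn_grp_def sum_tuples6)
qed

lemma card_arm_eq_sum:
  "finite I \<Longrightarrow> real (card {i\<in>I. fst (snd (S i)) = d}) = (\<Sum>i\<in>I. arm_ind d (S i))"
  by (simp add: arm_ind_def sum.inter_filter[symmetric])

theorem cbcov2n_eq_vstat_ratio: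
  assumes "n > 0"
  shows "cbcov2n n S j = arm_vstat True j n S / treated_frac n S ^ 5
                       + arm_vstat False j n S / (1 - treated_frac n S) ^ 5"
proof -
  let ?I1 = "{i\<in>{..<n}. fst (snd (S i)) = True}" and ?I0 = "{i\<in>{..<n}. fst (snd (S i)) = False}"
  let ?w = "treated_frac n S"
  have card1: "real (card ?I1) = real n * ?w"
    using assms card_arm_eq_sum[of "{..<n}" S True] by (simp add: treated_frac_def)
  have "arm_ind False u = 1 - arm_ind True u" for u by (simp add: arm_ind_def)
  then have card0: "real (card ?I0) = real n * (1 - ?w)"
    using assms card_arm_eq_sum[of "{..<n}" S False]
    by (simp add: treated_frac_def sum_subtractf right_diff_distrib)
  \<comment> \<open>This also holds for an empty arm (\<open>w = 0\<close>), where both sides are \<open>0\<close> by division by zero.\<close>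
  have rescale: "w * (T / (real n * w) ^ 6) = (T / real n ^ 6) / w ^ 5" for w T :: real
    using assms by (cases "w = 0") (simp_all add: field_simps power_mult_distrib eval_nat_numeral)
  have "cbcov2n n S j = ?w * ((\<Sum>xs\<in>tuples6 {..<n}. arm_kernel_at True j S xs) / (real n * ?w) ^ 6)
      + (1 - ?w) * ((\<Sum>xs\<in>tuples6 {..<n}. arm_kernel_at False j S xs) / (real n * (1 - ?w)) ^ 6)"
    using card1 card0 assms bcovn_grp_arm[OF finite_lessThan, where S = S and j = j and d = True]
      bcovn_grp_arm[OF finite_lessThan, where S = S and j = j and d = False]
    unfolding cbcov2n_def Let_def by simp
  then show ?thesis
    unfolding arm_vstat_def rescale .
qed

lemma abs_arm_vstat_le_1: "\<bar>arm_vstat d j n S\<bar> \<le> 1"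
proof (cases "n = 0")
  case False
  have "\<bar>\<Sum>xs\<in>tuples6 {..<n}. arm_kernel_at d j S xs\<bar> \<le> (\<Sum>xs\<in>tuples6 {..<n}. 1)"
    unfolding arm_kernel_at_def by (intro order_trans[OF sum_abs sum_mono] abs_arm_kernel_le_1)
  with False show ?thesis
    by (simp add: arm_vstat_def card_tuples6 abs_divide)
qed (simp add: arm_vstat_def)

lemma abs_treated_frac_le_1: "\<bar>treated_frac n S\<bar> \<le> 1"
proof (cases "n = 0")
  case False
  have "0 \<le> (\<Sum>i<n. arm_ind True (S i))" "(\<Sum>i<n. arm_ind True (S i)) \<le> (\<Sum>i<n. 1)"
    by (intro sum_nonneg sum_mono; simp add: arm_ind_def)+
  with False show ?thesis by (simp add: treated_frac_def abs_divide)
qed (simp add: treated_frac_def)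

lemma arm_vstat_change_one:
  assumes "m < n"
  shows "\<bar>arm_vstat d j n S - arm_vstat d j n (S(m := y))\<bar> \<le> 12 / real n"
proof -
  have agree: "arm_kernel_at d j S xs = arm_kernel_at d j (S(m := y)) xs"
    if "xs \<in> tuples6 ({..<n} - {m})" for xs
    using tuples6_nth[OF that] by (auto simp: arm_kernel_at_def)
  have "\<bar>(\<Sum>xs\<in>tuples6 {..<n}. arm_kernel_at d j S xs) - (\<Sum>xs\<in>tuples6 {..<n}. arm_kernel_at d j (S(m := y)) xs)\<bar>
          \<le> 12 * real n ^ 5"
    by (rule sum_tuples6_change_one_index[OF assms agree]) (simp_all add: arm_kernel_at_def abs_arm_kernel_le_1)
  then have "\<bar>arm_vstat d j n S - arm_vstat d j n (S(m := y))\<bar> \<le> 12 * real n ^ 5 / real n ^ 6"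
    unfolding arm_vstat_def diff_divide_distrib[symmetric] abs_divide by (simp add: divide_right_mono)
  also have "\<dots> = 12 / real n"
    using assms by (simp add: eval_nat_numeral field_simps)
  finally show ?thesis .
qed

lemma treated_frac_change_one:
  assumes "m < n"
  shows "\<bar>treated_frac n S - treated_frac n (S(m := y))\<bar> \<le> 1 / real n"
proof -
  have "(\<Sum>i<n. arm_ind True (S i)) - (\<Sum>i<n. arm_ind True ((S(m := y)) i))
        = (\<Sum>i\<in>{m}. arm_ind True (S i) - arm_ind True ((S(m := y)) i))"
    unfolding sum_subtractf[symmetric] using assms by (intro sum.mono_neutral_right) auto
  then have "\<bar>(\<Sum>i<n. arm_ind True (S i)) - (\<Sum>i<n. arm_ind True ((S(m := y)) i))\<bar> \<le> 1"
    by (simp add: arm_ind_def)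
  then show ?thesis
    unfolding treated_frac_def diff_divide_distrib[symmetric] abs_divide using assms
    by (simp add: divide_right_mono)
qed

context covariate_arm
begin

lemma measurable_arm_kernel:
  "(\<lambda>w. arm_kernel d' j' (fst w) (fst (snd w)) (fst (snd (snd w))) (fst (snd (snd (snd w))))
       (fst (snd (snd (snd (snd w))))) (snd (snd (snd (snd (snd w))))))
   \<in> borel_measurable (Q \<Otimes>\<^sub>M (Q \<Otimes>\<^sub>M (Q \<Otimes>\<^sub>M (Q \<Otimes>\<^sub>M (Q \<Otimes>\<^sub>M Q)))))"
  unfolding arm_kernel_def bcov_kernel_factor indicator_bball by measurable

lemmas measurable_arm_kernel_compose [measurable (raw)] = measurable_compose6[OF measurable_arm_kernel]

lemma measurable_arm_vstat [measurable]: "arm_vstat d' j' n \<in> borel_measurable (PiM {..<n} (\<lambda>_. Q))"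
proof -
  have "(\<lambda>S. arm_kernel_at d' j' S xs) \<in> borel_measurable (PiM {..<n} (\<lambda>_. Q))"
    if "xs \<in> tuples6 {..<n}" for xs
    unfolding arm_kernel_at_def using tuples6_nth[OF that] by measurable
  then show ?thesis
    unfolding arm_vstat_def[abs_def] by (intro borel_measurable_divide borel_measurable_sum) auto
qed

lemma measurable_treated_frac [measurable]: "treated_frac n \<in> borel_measurable (PiM {..<n} (\<lambda>_. Q))"
  unfolding treated_frac_def[abs_def] arm_ind_def by measurable

lemma expectation_treated_frac:
  assumes "n > 0"
  shows "(\<integral>S. treated_frac n S \<partial>PiM {..<n} (\<lambda>_. Q)) = treat_prob Q"
proof -
  let ?P = "PiM {..<n} (\<lambda>_. Q)"
  interpret P: prob_space ?P by (intro prob_space_PiM prob_Q)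
  have "(\<integral>S. arm_ind True (S i) \<partial>?P) = treat_prob Q" if "i < n" for i
  proof -
    have "(\<integral>S. arm_ind True (S i) \<partial>?P) = (\<integral>u. arm_ind True u \<partial>distr ?P Q (\<lambda>S. S i))"
      using that by (intro integral_distr[symmetric]) auto
    also have "distr ?P Q (\<lambda>S. S i) = Q"
      using that prob_Q by (intro distr_PiM_component) auto
    also have "(\<integral>u. arm_ind True u \<partial>Q) = (\<integral>u. indicator {u \<in> space Q. fst (snd u)} u \<partial>Q)"
      by (intro Bochner_Integration.integral_cong) (auto simp: arm_ind_def indicator_def)
    finally show ?thesis by (simp add: treat_prob_def)
  qed
  moreover have "integrable ?P (\<lambda>S. arm_ind True (S i))" if "i < n" for i
    using that by (intro integrable_bounded_prob[OF P.prob_space_axioms, where B = 1])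
      (auto simp: arm_ind_def)
  ultimately show ?thesis
    using assms by (simp add: treated_frac_def)
qed

end

context covariate_arm_pos
begin

lemma expectation_arm_kernel_at_distinct:
  assumes "xs \<in> tuples6 {..<n}" "distinct xs"
  shows "(\<integral>S. arm_kernel_at d j S xs \<partial>PiM {..<n} (\<lambda>_. Q)) = arm_weight ^ 6 * bcov2 \<theta>"
proof -
  have xs: "xs = [xs!0, xs!1, xs!2, xs!3, xs!4, xs!5]" by (rule tuples6_expand[OF assms(1)])
  have "(\<integral>S. arm_kernel_at d j S xs \<partial>PiM {..<n} (\<lambda>_. Q)) =
     (\<integral>u1. \<integral>u2. \<integral>u3. \<integral>u4. \<integral>u5. \<integral>u6. arm_kernel d j u1 u2 u3 u4 u5 u6 \<partial>Q \<partial>Q \<partial>Q \<partial>Q \<partial>Q \<partial>Q)"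
    unfolding arm_kernel_at_def
  proof (rule integral_PiM_distinct6[OF prob_Q finite_lessThan _ _ measurable_arm_kernel abs_arm_kernel_le_1])
    show "distinct [xs!0, xs!1, xs!2, xs!3, xs!4, xs!5]" using assms(2) xs by metis
    show "{xs!0, xs!1, xs!2, xs!3, xs!4, xs!5} \<subseteq> {..<n}" using tuples6_nth[OF assms(1)] by auto
  qed
  then show ?thesis by (simp add: nested_integral_arm_kernel_eq_bcov2)
qed

lemma arm_vstat_bias:
  assumes "n > 0"
  shows "\<bar>(\<integral>S. arm_vstat d j n S \<partial>PiM {..<n} (\<lambda>_. Q)) - arm_weight ^ 6 * bcov2 \<theta>\<bar> \<le> 30 / real n"
proof -
  let ?P = "PiM {..<n} (\<lambda>_. Q)"
  interpret P: prob_space ?P by (intro prob_space_PiM prob_Q)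
  have "integrable ?P (\<lambda>S. arm_kernel_at d j S xs)" if "xs \<in> tuples6 {..<n}" for xs
    using that tuples6_nth[OF that] unfolding arm_kernel_at_def
    by (intro integrable_bounded_prob[OF P.prob_space_axioms _ abs_arm_kernel_le_1]) measurable
  then have "(\<integral>S. arm_vstat d j n S \<partial>?P) = (\<Sum>xs\<in>tuples6 {..<n}. \<integral>S. arm_kernel_at d j S xs \<partial>?P) / real n ^ 6"
    unfolding arm_vstat_def by simp
  moreover have "\<bar>arm_weight ^ 6 * bcov2 \<theta>\<bar> \<le> 1"
    using arm_weight_pos arm_weight_le_1 bcov2_bounds[OF prob_space_cond_law]
    by (simp add: abs_mult power_le_one mult_le_one)
  ultimately show ?thesis
    using assms expectation_arm_kernel_at_distinct
    by (simp only:) (intro average_tuples6_close abs_integral_le_const[OF P.prob_space_axioms];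
        simp add: arm_kernel_at_def abs_arm_kernel_le_1)
qed

end

section \<open>Concentration\<close>

lemma measure_arm_eq:
  assumes "prob_space Q" "sets Q = sets obs_space" "treat_prob Q = \<omega>"
  shows "measure Q {u \<in> space Q. fst (snd u) = d} = (if d then \<omega> else 1 - \<omega>)"
proof -
  interpret covariate_arm Q 0 d by (intro covariate_arm.intro assms(1,2))
  have "{u \<in> space Q. fst (snd u)} \<in> sets Q" by measurable
  moreover have "{u \<in> space Q. fst (snd u) = False} = space Q - {u \<in> space Q. fst (snd u)}" by auto
  ultimately show ?thesis
    using assms(3) by (cases d) (simp_all add: Q.prob_compl treat_prob_def)
qed

context covariate_arm
begin

lemma treated_frac_deviation:
  assumes "n > 0" "\<epsilon> > 0"
  shows "measure (PiM {..<n} (\<lambda>_. Q))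
           {S \<in> space (PiM {..<n} (\<lambda>_. Q)). \<bar>treated_frac n S - treat_prob Q\<bar> \<ge> \<epsilon>}
         \<le> 2 * exp (-2 * \<epsilon>\<^sup>2 * real n)"
proof -
  have "measure (PiM {..<n} (\<lambda>_. Q))
          {S \<in> space (PiM {..<n} (\<lambda>_. Q)). \<bar>treated_frac n S - treat_prob Q\<bar> \<ge> \<epsilon>}
        \<le> 2 * exp (-2 * \<epsilon>\<^sup>2 / (real n * (1 / real n)\<^sup>2))"
    unfolding expectation_treated_frac[OF assms(1), symmetric] using assms
    by (intro mcdiarmid_inequality[OF prob_Q _ _ _ _ abs_treated_frac_le_1 treated_frac_change_one]) auto
  also have "-2 * \<epsilon>\<^sup>2 / (real n * (1 / real n)\<^sup>2) = -2 * \<epsilon>\<^sup>2 * real n"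
    using assms by (simp add: field_simps power2_eq_square)
  finally show ?thesis .
qed

lemma arm_vstat_deviation:
  assumes "n > 0" "\<epsilon> > 0"
  shows "measure (PiM {..<n} (\<lambda>_. Q))
           {S \<in> space (PiM {..<n} (\<lambda>_. Q)).
              \<bar>arm_vstat d j n S - (\<integral>S. arm_vstat d j n S \<partial>PiM {..<n} (\<lambda>_. Q))\<bar> \<ge> \<epsilon>}
         \<le> 2 * exp (- \<epsilon>\<^sup>2 * real n / 72)"
proof -
  have "measure (PiM {..<n} (\<lambda>_. Q))
           {S \<in> space (PiM {..<n} (\<lambda>_. Q)).
              \<bar>arm_vstat d j n S - (\<integral>S. arm_vstat d j n S \<partial>PiM {..<n} (\<lambda>_. Q))\<bar> \<ge> \<epsilon>}
        \<le> 2 * exp (-2 * \<epsilon>\<^sup>2 / (real n * (12 / real n)\<^sup>2))"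
    using assms
    by (intro mcdiarmid_inequality[OF prob_Q _ _ _ _ abs_arm_vstat_le_1 arm_vstat_change_one]) auto
  also have "-2 * \<epsilon>\<^sup>2 / (real n * (12 / real n)\<^sup>2) = - \<epsilon>\<^sup>2 * real n / 72"
    using assms by (simp add: field_simps power2_eq_square)
  finally show ?thesis .
qed

end

lemma measurable_cbcov2n [measurable]:
  assumes "prob_space Q" "sets Q = sets obs_space" "n > 0"
  shows "(\<lambda>S. cbcov2n n S j) \<in> borel_measurable (PiM {..<n} (\<lambda>_. Q))"
proof -
  interpret covariate_arm Q j True by (intro covariate_arm.intro assms(1,2))
  show ?thesis
    unfolding cbcov2n_eq_vstat_ratio[OF assms(3)] by measurable
qed

lemma cbcov2n_close_of_statistics_close:
  fixes Q :: "obs measure" and S :: "nat \<Rightarrow> obs" and n j :: nat and \<omega> \<epsilon> :: real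
  defines "P \<equiv> PiM {..<n} (\<lambda>_. Q)"
    and "\<eta> \<equiv> \<epsilon> + 30 / real n"
  assumes prob: "prob_space Q" and sets: "sets Q = sets obs_space"
    and \<omega>: "treat_prob Q = \<omega>" "0 < \<omega>" "\<omega> < 1"
    and n: "n > 0" and \<eta>_small: "\<eta> \<le> min \<omega> (1 - \<omega>) / 2"
    and frac: "\<bar>treated_frac n S - \<omega>\<bar> < \<epsilon>"
    and deviation: "\<And>d. \<bar>arm_vstat d j n S - (\<integral>S. arm_vstat d j n S \<partial>P)\<bar> < \<epsilon>"
  shows "\<bar>cbcov2n n S j - cbcov2 Q j\<bar> \<le> 2 * ratio_const (min \<omega> (1 - \<omega>)) * \<eta>"
proof -
  interpret arm: covariate_arm Q j d for d by (intro covariate_arm.intro prob sets)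
  interpret arm_pos: covariate_arm_pos Q j d for d
    using measure_arm_eq[OF prob sets \<omega>(1)] \<omega> by unfold_locales auto
  have bias: "\<bar>(\<integral>S. arm_vstat d j n S \<partial>P) - (if d then \<omega> else 1 - \<omega>) ^ 6 * bcov2 (cond_law Q j d)\<bar>
                \<le> 30 / real n" for d
    using arm_pos.arm_vstat_bias[OF n, of d] arm_pos.arm_weight_eq measure_arm_eq[OF prob sets \<omega>(1), of d]
    unfolding P_def arm_pos.arm_set_def by simp
  have vstat: "\<bar>arm_vstat d j n S - (if d then \<omega> else 1 - \<omega>) ^ 6 * bcov2 (cond_law Q j d)\<bar> \<le> \<eta>" for d
    using deviation[of d] bias[of d] unfolding \<eta>_def abs_less_iff abs_le_iff by linarith
  have "\<bar>treated_frac n S - \<omega>\<bar> \<le> \<eta>"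
    using frac unfolding \<eta>_def by (simp add: add_increasing2 less_imp_le)
  then show ?thesis
    unfolding cbcov2n_eq_vstat_ratio[OF n] cbcov2_def \<omega>(1)
    using vstat[of True] vstat[of False] \<eta>_small bcov2_bounds[OF arm_pos.prob_space_cond_law] \<omega>
    by (intro ratio_pair_perturbation_bound) auto
qed

lemma cbcov2n_uniform_deviation:
  fixes Q :: "obs measure" and p n :: nat and \<omega> \<epsilon> :: real
  defines "P \<equiv> PiM {..<n} (\<lambda>_. Q)"
    and "\<eta> \<equiv> \<epsilon> + 30 / real n"
  assumes prob: "prob_space Q" and sets: "sets Q = sets obs_space"
    and \<omega>: "treat_prob Q = \<omega>" "0 < \<omega>" "\<omega> < 1"
    and n: "n > 0" and \<epsilon>: "\<epsilon> > 0" and \<eta>_small: "\<eta> \<le> min \<omega> (1 - \<omega>) / 2"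
  shows "1 - (4 * real p + 2) * exp (- \<epsilon>\<^sup>2 * real n / 72) \<le> measure P
           {S \<in> space P. \<forall>j<p. \<bar>cbcov2n n S j - cbcov2 Q j\<bar> \<le> 2 * ratio_const (min \<omega> (1 - \<omega>)) * \<eta>}"
proof -
  interpret P: prob_space P unfolding P_def by (intro prob_space_PiM prob)
  interpret arm: covariate_arm Q j d for j d by (intro covariate_arm.intro prob sets)
  define vstat_mean where "vstat_mean j d = (\<integral>S. arm_vstat d j n S \<partial>P)" for j d
  define bad_frac where "bad_frac = {S \<in> space P. \<bar>treated_frac n S - \<omega>\<bar> \<ge> \<epsilon>}"
  define bad_vstat where
    "bad_vstat jd = {S \<in> space P. \<bar>arm_vstat (snd jd) (fst jd) n S - vstat_mean (fst jd) (snd jd)\<bar> \<ge> \<epsilon>}" for jd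
  define J where "J = {..<p} \<times> (UNIV :: bool set)"
  define bad where "bad = bad_frac \<union> (\<Union>jd\<in>J. bad_vstat jd)"
  have [measurable]: "bad_frac \<in> sets P" "bad_vstat jd \<in> sets P" for jd
    unfolding bad_frac_def bad_vstat_def P_def by measurable
  have "finite J" by (simp add: J_def)
  have "measure P bad \<le> measure P bad_frac + (\<Sum>jd\<in>J. measure P (bad_vstat jd))"
    unfolding bad_def using \<open>finite J\<close>
    by (intro order_trans[OF measure_Un_le] add_left_mono measure_UNION_le) auto
  also have "\<dots> \<le> 2 * exp (- \<epsilon>\<^sup>2 * real n / 72) + (\<Sum>jd\<in>J. 2 * exp (- \<epsilon>\<^sup>2 * real n / 72))"
  proof (intro add_mono sum_mono)
    have "measure P bad_frac \<le> 2 * exp (-2 * \<epsilon>\<^sup>2 * real n)"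
      unfolding bad_frac_def P_def using arm.treated_frac_deviation[OF n \<epsilon>] \<omega>(1) by simp
    also have "\<dots> \<le> 2 * exp (- \<epsilon>\<^sup>2 * real n / 72)" using n by simp
    finally show "measure P bad_frac \<le> 2 * exp (- \<epsilon>\<^sup>2 * real n / 72)" .
    show "measure P (bad_vstat jd) \<le> 2 * exp (- \<epsilon>\<^sup>2 * real n / 72)" for jd
      unfolding bad_vstat_def vstat_mean_def P_def by (rule arm.arm_vstat_deviation[OF n \<epsilon>])
  qed
  also have "\<dots> = (4 * real p + 2) * exp (- \<epsilon>\<^sup>2 * real n / 72)"
    by (simp add: J_def card_cartesian_product algebra_simps)
  finally have bad_small: "measure P bad \<le> (4 * real p + 2) * exp (- \<epsilon>\<^sup>2 * real n / 72)" .
  have close: "\<bar>cbcov2n n S j - cbcov2 Q j\<bar> \<le> 2 * ratio_const (min \<omega> (1 - \<omega>)) * \<eta>"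
    if "S \<in> space P - bad" "j < p" for S j
  proof (unfold P_def \<eta>_def, rule cbcov2n_close_of_statistics_close[OF prob sets \<omega> n])
    show "\<bar>treated_frac n S - \<omega>\<bar> < \<epsilon>"
      using that unfolding bad_def bad_frac_def by auto
    have "S \<notin> bad_vstat (j, d)" for d
      using that unfolding bad_def J_def by blast
    then show "\<bar>arm_vstat d j n S - (\<integral>S. arm_vstat d j n S \<partial>PiM {..<n} (\<lambda>_. Q))\<bar> < \<epsilon>" for d
      using that unfolding bad_vstat_def vstat_mean_def P_def by (force simp: not_le)
  qed (use \<eta>_small in \<open>simp add: \<eta>_def\<close>)
  have "1 - measure P bad \<le> measure P (space P - bad)"
    unfolding bad_def by (simp add: P.prob_compl \<open>finite J\<close>)
  also have "\<dots> \<le> measure P {S \<in> space P. \<forall>j<p. \<bar>cbcov2n n S j - cbcov2 Q j\<bar> \<le> 2 * ratio_const (min \<omega> (1 - \<omega>)) * \<eta>}"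
  proof (intro P.finite_measure_mono)
    note [measurable] = measurable_cbcov2n[OF prob sets n]
    show "{S \<in> space P. \<forall>j<p. \<bar>cbcov2n n S j - cbcov2 Q j\<bar> \<le> 2 * ratio_const (min \<omega> (1 - \<omega>)) * \<eta>} \<in> sets P"
      unfolding P_def by measurable
  qed (use close in auto)
  finally show ?thesis using bad_small by linarith
qed

section \<open>Sure screening\<close>

lemma screening_separates:
  fixes r \<rho> :: "nat \<Rightarrow> real"
  assumes "A \<subseteq> {..<p}" and signal: "\<And>j. j \<in> A \<Longrightarrow> 2 * t \<le> \<rho> j"
    and close: "\<And>j. j < p \<Longrightarrow> \<bar>r j - \<rho> j\<bar> < t"
  shows "\<forall>i\<in>{j\<in>{..<p}. \<rho> j = 0}. \<forall>j\<in>A. r i < r j"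
proof (intro ballI)
  fix i j assume "i \<in> {j\<in>{..<p}. \<rho> j = 0}" "j \<in> A"
  then have "r i < t" "t < r j"
    using close[of i] close[of j] signal[of j] assms(1) by (auto simp: abs_less_iff)
  then show "r i < r j" by simp
qed

lemma screening_top_set:
  fixes r \<rho> :: "nat \<Rightarrow> real"
  assumes "t > 0" and A: "A \<subseteq> {..<p}" and signal: "\<And>j. j \<in> A \<Longrightarrow> 2 * t \<le> \<rho> j"
    and sparse: "card {j\<in>{..<p}. \<rho> j \<noteq> 0} \<le> q"
    and close: "\<And>j. j < p \<Longrightarrow> \<bar>r j - \<rho> j\<bar> < t"
  shows "\<forall>K. top_set r p q K \<longrightarrow> A \<subseteq> K"
proof (intro allI impI subsetI)
  fix K j assume K: "top_set r p q K" and "j \<in> A"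
  show "j \<in> K"
  proof (rule ccontr)
    assume "j \<notin> K"
    let ?V = "{j\<in>{..<p}. \<rho> j \<noteq> 0}"
    have "K \<subseteq> ?V"
    proof
      fix k assume "k \<in> K"
      with K \<open>j \<in> A\<close> \<open>j \<notin> K\<close> A have "r j \<le> r k" "k < p"
        unfolding top_set_def by auto
      with screening_separates[OF A signal close] \<open>j \<in> A\<close> show "k \<in> ?V"
        by fastforce
    qed
    moreover have "card ?V \<le> card K"
      using sparse K unfolding top_set_def by simp
    ultimately have "K = ?V"
      using card_mono[of ?V K] by (intro card_subset_eq) auto
    moreover have "j \<in> ?V" using signal[OF \<open>j \<in> A\<close>] \<open>t > 0\<close> \<open>j \<in> A\<close> A by auto
    ultimately show False using \<open>j \<notin> K\<close> by simp
  qed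
qed

lemma sets_Collect_top_set_contains:
  fixes r :: "'a \<Rightarrow> nat \<Rightarrow> real"
  assumes [measurable]: "\<And>j. (\<lambda>x. r x j) \<in> borel_measurable M"
  shows "{x \<in> space M. \<forall>K. top_set (r x) p q K \<longrightarrow> A \<subseteq> K} \<in> sets M"
proof -
  have "{x \<in> space M. \<forall>K. top_set (r x) p q K \<longrightarrow> A \<subseteq> K} =
        {x \<in> space M. \<forall>K\<in>Pow {..<p}. card K = q \<and> (\<forall>j\<in>K. \<forall>i\<in>{..<p} - K. r x i \<le> r x j) \<longrightarrow> A \<subseteq> K}"
    unfolding top_set_def by blast
  also have "\<dots> \<in> sets M" by measurable
  finally show ?thesis .
qed

lemma screening_prob_ge:
  fixes Q :: "obs measure" and p q n :: nat and A :: "nat set" and \<omega> \<epsilon> t :: real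
  defines "P \<equiv> PiM {..<n} (\<lambda>_. Q)"
    and "\<eta> \<equiv> \<epsilon> + 30 / real n"
    and "b \<equiv> (4 * real p + 2) * exp (- \<epsilon>\<^sup>2 * real n / 72)"
  assumes prob: "prob_space Q" and sets: "sets Q = sets obs_space"
    and \<omega>: "treat_prob Q = \<omega>" "0 < \<omega>" "\<omega> < 1"
    and n: "n > 0" and \<epsilon>: "\<epsilon> > 0" and \<eta>_small: "\<eta> \<le> min \<omega> (1 - \<omega>) / 2"
    and t: "2 * ratio_const (min \<omega> (1 - \<omega>)) * \<eta> < t"
    and A: "A \<subseteq> {..<p}" and signal: "\<And>j. j \<in> A \<Longrightarrow> 2 * t \<le> cbcov2 Q j"
    and sparse: "card {j\<in>{..<p}. cbcov2 Q j \<noteq> 0} \<le> q"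
  shows "1 - b \<le> measure P {S \<in> space P. \<forall>i\<in>{j\<in>{..<p}. cbcov2 Q j = 0}. \<forall>j\<in>A. cbcov2n n S i < cbcov2n n S j}"
    and "1 - b \<le> measure P {S \<in> space P. \<forall>K. top_set (cbcov2n n S) p q K \<longrightarrow> A \<subseteq> K}"
proof -
  interpret P: prob_space P unfolding P_def by (intro prob_space_PiM prob)
  note [measurable] = measurable_cbcov2n[OF prob sets n, folded P_def]
  let ?G = "{S \<in> space P. \<forall>j<p. \<bar>cbcov2n n S j - cbcov2 Q j\<bar> \<le> 2 * ratio_const (min \<omega> (1 - \<omega>)) * \<eta>}"
  have "1 - b \<le> measure P ?G"
    unfolding P_def \<eta>_def b_def using \<eta>_small
    by (intro cbcov2n_uniform_deviation[OF prob sets \<omega> n \<epsilon>]) (simp add: \<eta>_def)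
  have "0 \<le> 2 * ratio_const (min \<omega> (1 - \<omega>)) * \<eta>"
    using \<omega> \<epsilon> by (auto simp: \<eta>_def less_imp_le ratio_const_pos)
  then have "t > 0" using t by linarith
  have close: "\<bar>cbcov2n n S j - cbcov2 Q j\<bar> < t" if "S \<in> ?G" "j < p" for S j
    using that t by fastforce
  have "?G \<subseteq> {S \<in> space P. \<forall>i\<in>{j\<in>{..<p}. cbcov2 Q j = 0}. \<forall>j\<in>A. cbcov2n n S i < cbcov2n n S j}"
  proof
    fix S assume "S \<in> ?G"
    with screening_separates[OF A signal close[OF \<open>S \<in> ?G\<close>]]
    show "S \<in> {S \<in> space P. \<forall>i\<in>{j\<in>{..<p}. cbcov2 Q j = 0}. \<forall>j\<in>A. cbcov2n n S i < cbcov2n n S j}"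
      by simp
  qed
  then have "measure P ?G \<le> measure P {S \<in> space P. \<forall>i\<in>{j\<in>{..<p}. cbcov2 Q j = 0}. \<forall>j\<in>A. cbcov2n n S i < cbcov2n n S j}"
    using finite_subset[OF A] by (intro P.finite_measure_mono) auto
  moreover have "?G \<subseteq> {S \<in> space P. \<forall>K. top_set (cbcov2n n S) p q K \<longrightarrow> A \<subseteq> K}"
  proof
    fix S assume "S \<in> ?G"
    with screening_top_set[OF \<open>t > 0\<close> A signal sparse close[OF \<open>S \<in> ?G\<close>]]
    show "S \<in> {S \<in> space P. \<forall>K. top_set (cbcov2n n S) p q K \<longrightarrow> A \<subseteq> K}"
      by simp
  qed
  then have "measure P ?G \<le> measure P {S \<in> space P. \<forall>K. top_set (cbcov2n n S) p q K \<longrightarrow> A \<subseteq> K}"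
    by (intro P.finite_measure_mono sets_Collect_top_set_contains) auto
  ultimately show "1 - b \<le> measure P {S \<in> space P. \<forall>i\<in>{j\<in>{..<p}. cbcov2 Q j = 0}. \<forall>j\<in>A. cbcov2n n S i < cbcov2n n S j}"
    and "1 - b \<le> measure P {S \<in> space P. \<forall>K. top_set (cbcov2n n S) p q K \<longrightarrow> A \<subseteq> K}"
    using \<open>1 - b \<le> measure P ?G\<close> by linarith+
qed

lemma filterlim_real_powr_sequentially:
  assumes "\<alpha> > 0"
  shows "filterlim (\<lambda>n. real n powr \<alpha>) at_top sequentially"
proof -
  have "filterlim (\<lambda>x::real. exp (\<alpha> * ln x)) at_top at_top"
    using assms by (intro filterlim_compose[OF exp_at_top] filterlim_tendsto_pos_mult_at_top[OF tendsto_const]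
      ln_at_top)
  moreover have "eventually (\<lambda>x::real. exp (\<alpha> * ln x) = x powr \<alpha>) at_top"
    using eventually_gt_at_top[of 0] by eventually_elim (simp add: powr_def)
  ultimately have "filterlim (\<lambda>x::real. x powr \<alpha>) at_top at_top"
    using filterlim_cong by fastforce
  then show ?thesis by (rule filterlim_compose[OF _ filterlim_real_sequentially])
qed

lemma exp_neg_powr_tendsto_zero:
  assumes "a > 0" "\<alpha> > 0"
  shows "(\<lambda>n. exp (- a * real n powr \<alpha>)) \<longlonglongrightarrow> 0"
proof -
  have "filterlim (\<lambda>n. - a * real n powr \<alpha>) at_bot sequentially"
    using assms by (intro filterlim_tendsto_neg_mult_at_bot[OF tendsto_const _ filterlim_real_powr_sequentially])
      auto
  from filterlim_compose[OF exp_at_bot this] show ?thesis by simp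
qed

lemma union_bound_tendsto_zero:
  fixes p :: "nat \<Rightarrow> nat"
  assumes "a > 0" "\<alpha> > 0" and log_p: "(\<lambda>n. ln (real (p n))) \<in> o(\<lambda>n. real n powr \<alpha>)"
  shows "(\<lambda>n. (4 * real (p n) + 2) * exp (- a * real n powr \<alpha>)) \<longlonglongrightarrow> 0"
proof (rule tendsto_sandwich[of "\<lambda>_. 0" _ _ "\<lambda>n. 6 * exp (- (a / 2) * real n powr \<alpha>)"])
  have "eventually (\<lambda>n. \<bar>ln (real (p n))\<bar> \<le> a / 2 * \<bar>real n powr \<alpha>\<bar>) sequentially"
    using landau_o.smallD[OF log_p, of "a / 2"] \<open>a > 0\<close> by simp
  then show "eventually (\<lambda>n. (4 * real (p n) + 2) * exp (- a * real n powr \<alpha>)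
                               \<le> 6 * exp (- (a / 2) * real n powr \<alpha>)) sequentially"
  proof eventually_elim
    case (elim n)
    let ?x = "real n powr \<alpha>"
    have "real (p n) \<le> exp (a / 2 * ?x)"
    proof (cases "p n = 0")
      case False
      then have "real (p n) = exp (ln (real (p n)))" by simp
      also have "\<dots> \<le> exp (a / 2 * ?x)" using elim by simp
      finally show ?thesis .
    qed simp
    moreover have "1 \<le> exp (a / 2 * ?x)" using \<open>a > 0\<close> by simp
    ultimately have "4 * real (p n) + 2 \<le> 6 * exp (a / 2 * ?x)" by linarith
    then have "(4 * real (p n) + 2) * exp (- a * ?x) \<le> 6 * exp (a / 2 * ?x) * exp (- a * ?x)"
      by (rule mult_right_mono) simp
    also have "\<dots> = 6 * exp (- (a / 2) * ?x)" by (simp add: mult.assoc exp_add[symmetric])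
    finally show ?case .
  qed
  show "(\<lambda>n. 6 * exp (- (a / 2) * real n powr \<alpha>)) \<longlonglongrightarrow> 0"
    using tendsto_mult_right_zero[OF exp_neg_powr_tendsto_zero[of "a / 2" \<alpha>]] assms by simp
qed auto

lemma eventually_screening_rates:
  fixes c \<kappa> K w :: real
  assumes c: "c > 0" and \<kappa>: "0 \<le> \<kappa>" "\<kappa> < 1" and K: "K > 0" and w: "w > 0"
  defines "\<delta> \<equiv> min (c / (8 * K)) (w / 4)"
  shows "eventually (\<lambda>n. n > 0 \<and> \<delta> * real n powr (- \<kappa>) + 30 / real n \<le> w / 2
           \<and> 2 * K * (\<delta> * real n powr (- \<kappa>) + 30 / real n) < c * real n powr (- \<kappa>)) sequentially"
proof -
  have "eventually (\<lambda>n. 30 / real n < w / 4) sequentially"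
    using w by (intro order_tendstoD(2)[OF lim_const_over_n]) simp
  moreover have "eventually (\<lambda>n. real n powr (\<kappa> - 1) < c / (80 * K)) sequentially"
    using \<kappa> c K by (intro order_tendstoD(2)[OF tendsto_neg_powr[OF _ filterlim_real_sequentially]]) auto
  ultimately show ?thesis
    using eventually_gt_at_top[of 0]
  proof eventually_elim
    case (elim n)
    let ?x = "real n powr (- \<kappa>)"
    have "1 \<le> real n powr \<kappa>" using elim \<kappa> by (intro ge_one_powr_ge_zero) auto
    then have x: "0 < ?x" "?x \<le> 1"
      using elim by (auto simp: powr_minus inverse_le_1_iff)
    have "0 < \<delta>" "\<delta> \<le> w / 4" "\<delta> \<le> c / (8 * K)"
      using c K w by (simp_all add: \<delta>_def)
    then have "\<delta> * ?x \<le> w / 4"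
      using x mult_left_le[of ?x \<delta>] by linarith
    have "2 * K * \<delta> \<le> c / 4"
      using \<open>\<delta> \<le> c / (8 * K)\<close> K by (simp add: field_simps)
    then have "2 * K * (\<delta> * ?x) \<le> c / 4 * ?x"
      using x mult_right_mono[of "2 * K * \<delta>" "c / 4" ?x] by (simp add: mult.assoc)
    have "real n powr (\<kappa> - 1) * ?x = real n powr (- 1)"
      by (simp flip: powr_add)
    also have "\<dots> = 1 / real n"
      by (simp add: powr_minus_divide)
    finally have inv: "real n powr (\<kappa> - 1) * ?x = 1 / real n" .
    have "2 * K * (30 / real n) = 60 * K * (real n powr (\<kappa> - 1) * ?x)"
      unfolding inv by simp
    also have "\<dots> < 60 * K * (c / (80 * K) * ?x)"
      using elim x K by (intro mult_strict_right_mono mult_strict_left_mono) auto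
    also have "\<dots> = 3 * c / 4 * ?x" using K by simp
    finally show ?case
      using elim \<open>\<delta> * ?x \<le> w / 4\<close> \<open>2 * K * (\<delta> * ?x) \<le> c / 4 * ?x\<close>
      unfolding distrib_left by linarith
  qed
qed

lemma tendsto_one_of_eventually_ge:
  fixes m b :: "nat \<Rightarrow> real"
  assumes "eventually (\<lambda>n. 1 - b n \<le> m n) sequentially" "\<And>n. m n \<le> 1" "b \<longlonglongrightarrow> 0"
  shows "m \<longlonglongrightarrow> 1"
proof (rule tendsto_sandwich[OF assms(1) _ _ tendsto_const])
  show "(\<lambda>n. 1 - b n) \<longlonglongrightarrow> 1"
    using tendsto_diff[OF tendsto_const assms(3), of 1] by simp
qed (use assms(2) in simp)

lemma eventually_screening_prob_ge:
  fixes Q :: "nat \<Rightarrow> obs measure" and p q :: "nat \<Rightarrow> nat" and A :: "nat \<Rightarrow> nat set"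
    and \<omega> c \<kappa> \<delta> :: real
  assumes prob: "\<And>n. prob_space (Q n)" and sets: "\<And>n. sets (Q n) = sets obs_space"
    and \<omega>: "\<And>n. treat_prob (Q n) = \<omega>" "0 < \<omega>" "\<omega> < 1"
    and c: "c > 0" and \<kappa>: "0 \<le> \<kappa>" "\<kappa> < 1"
    and A: "\<And>n. A n \<subseteq> {..<p n}"
    and signal: "\<And>n j. j \<in> A n \<Longrightarrow> 2 * c * real n powr (- \<kappa>) \<le> cbcov2 (Q n) j"
    and sparse: "\<And>n. card {j\<in>{..<p n}. cbcov2 (Q n) j \<noteq> 0} \<le> q n"
    and \<delta>: "\<delta> = min (c / (8 * ratio_const (min \<omega> (1 - \<omega>)))) (min \<omega> (1 - \<omega>) / 4)"
  shows "eventually (\<lambda>n.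
           1 - (4 * real (p n) + 2) * exp (- (\<delta>\<^sup>2 / 72) * real n powr (1 - 2 * \<kappa>))
             \<le> measure (PiM {..<n} (\<lambda>_. Q n)) {S \<in> space (PiM {..<n} (\<lambda>_. Q n)).
                  \<forall>i\<in>{j\<in>{..<p n}. cbcov2 (Q n) j = 0}. \<forall>j\<in>A n. cbcov2n n S i < cbcov2n n S j}
         \<and> 1 - (4 * real (p n) + 2) * exp (- (\<delta>\<^sup>2 / 72) * real n powr (1 - 2 * \<kappa>))
             \<le> measure (PiM {..<n} (\<lambda>_. Q n)) {S \<in> space (PiM {..<n} (\<lambda>_. Q n)).
                  \<forall>K. top_set (cbcov2n n S) (p n) (q n) K \<longrightarrow> A n \<subseteq> K}) sequentially"
proof -
  have "min \<omega> (1 - \<omega>) > 0" "ratio_const (min \<omega> (1 - \<omega>)) > 0"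
    using \<omega> by (simp_all add: ratio_const_pos)
  from eventually_screening_rates[OF c \<kappa> this(2,1), folded \<delta>]
  show ?thesis
  proof eventually_elim
    case (elim n)
    define \<epsilon> where "\<epsilon> = \<delta> * real n powr - \<kappa>"
    have "0 < \<delta>" using c \<omega> by (simp add: \<delta> ratio_const_pos)
    have exponent: "- (\<delta>\<^sup>2 / 72) * real n powr (1 - 2 * \<kappa>) = - \<epsilon>\<^sup>2 * real n / 72"
      using elim by (simp add: \<epsilon>_def power2_eq_square powr_diff powr_minus field_simps flip: powr_add)
    have "2 * (c * real n powr - \<kappa>) \<le> cbcov2 (Q n) j" if "j \<in> A n" for j
      using signal[OF that] by (simp add: mult.assoc)
    then show ?case
      unfolding exponent using elim \<open>0 < \<delta>\<close> A
      by (intro conjI screening_prob_ge[OF prob sets \<omega>(1-3) _ _ _ _ _ _ sparse]) (auto simp: \<epsilon>_def)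
  qed
qed

theorem theorem1:
  fixes Q :: "nat \<Rightarrow> obs measure"
    and p q :: "nat \<Rightarrow> nat"
    and C P :: "nat \<Rightarrow> nat set"
    and \<omega> c \<kappa> :: real
  assumes prob: "\<And>n. prob_space (Q n)"
    and sets_Q: "\<And>n. sets (Q n) = sets obs_space"
    and omega: "\<And>n. treat_prob (Q n) = \<omega>" "0 < \<omega>" "\<omega> < 1"
    and CP_sub: "\<And>n. C n \<subseteq> {..<p n}" "\<And>n. P n \<subseteq> {..<p n}"
    and c_pos: "c > 0" and kappa: "0 \<le> \<kappa>" "\<kappa> < 1/2"
    and A1: "\<And>n j. j \<in> C n \<union> P n \<Longrightarrow> cbcov2 (Q n) j \<ge> 2 * c * real n powr (- \<kappa>)"
    and A2: "(\<lambda>n. ln (real (p n))) \<in> o(\<lambda>n. real n powr (1 - 2 * \<kappa>))"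
    and Wc: "\<And>n. card {j\<in>{..<p n}. cbcov2 (Q n) j \<noteq> 0} \<le> q n"
  shows "(\<lambda>n. measure (PiM {..<n} (\<lambda>_. Q n))
            {S \<in> space (PiM {..<n} (\<lambda>_. Q n)).
               \<forall>i\<in>{j\<in>{..<p n}. cbcov2 (Q n) j = 0}. \<forall>j\<in>C n \<union> P n.
                 cbcov2n n S i < cbcov2n n S j}) \<longlonglongrightarrow> 1
       \<and> (\<lambda>n. measure (PiM {..<n} (\<lambda>_. Q n))
            {S \<in> space (PiM {..<n} (\<lambda>_. Q n)).
               \<forall>K. top_set (cbcov2n n S) (p n) (q n) K \<longrightarrow> C n \<union> P n \<subseteq> K}) \<longlonglongrightarrow> 1"
proof -
  define \<delta> where "\<delta> = min (c / (8 * ratio_const (min \<omega> (1 - \<omega>)))) (min \<omega> (1 - \<omega>) / 4)"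
  have "\<delta> > 0"
    using omega c_pos by (simp add: \<delta>_def ratio_const_pos)
  have "(\<lambda>n. (4 * real (p n) + 2) * exp (- (\<delta>\<^sup>2 / 72) * real n powr (1 - 2 * \<kappa>))) \<longlonglongrightarrow> 0"
    using \<open>\<delta> > 0\<close> kappa A2 by (intro union_bound_tendsto_zero) auto
  moreover have "eventually (\<lambda>n.
      1 - (4 * real (p n) + 2) * exp (- (\<delta>\<^sup>2 / 72) * real n powr (1 - 2 * \<kappa>))
        \<le> measure (PiM {..<n} (\<lambda>_. Q n)) {S \<in> space (PiM {..<n} (\<lambda>_. Q n)).
             \<forall>i\<in>{j\<in>{..<p n}. cbcov2 (Q n) j = 0}. \<forall>j\<in>C n \<union> P n. cbcov2n n S i < cbcov2n n S j}
    \<and> 1 - (4 * real (p n) + 2) * exp (- (\<delta>\<^sup>2 / 72) * real n powr (1 - 2 * \<kappa>))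
        \<le> measure (PiM {..<n} (\<lambda>_. Q n)) {S \<in> space (PiM {..<n} (\<lambda>_. Q n)).
             \<forall>K. top_set (cbcov2n n S) (p n) (q n) K \<longrightarrow> C n \<union> P n \<subseteq> K}) sequentially"
    using kappa CP_sub A1
    by (intro eventually_screening_prob_ge[OF prob sets_Q omega c_pos _ _ _ _ Wc \<delta>_def]) auto
  moreover have "measure (PiM {..<n} (\<lambda>_. Q n)) X \<le> 1" for n X
    by (intro prob_space.prob_le_1 prob_space_PiM prob)
  ultimately show ?thesis
    by (auto intro!: tendsto_one_of_eventually_ge elim: eventually_mono)
qed

end
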